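(* There is an absolute constant $c>0$ such that the following holds. Let $G$ be a simple undirected graph presented as a stream of $m$ distinct edges $e_1,\dots,e_m$, with $W$ wedges and $T\ge 1$ triangles, and let $\kappa = 3T/W$. Assume $W \ge m$ and fix $\beta\in(0,1)$. Run the algorithm Single-Bit with a reservoir of $s$ slots, where $s \ge c\,m/(\beta^3\sqrt{T})$, and let $b_m$ be its output bit at the final time $m$ and $\mathcal{W}_m$ its wedge multiset at time $m$. Set $est = m^2|\mathcal{W}_m|/(s(s-1))$. Then $|\kappa/3 - \mathbf{E}[b_m]| < \beta$, and with probability greater than $1-\beta$, $|W - est| < \beta W$.
   Context: A wedge in a graph is a path of length 2, i.e. an unordered pair of distinct edges sharing exactly one vertex; $W$ is the number of wedges of $G$. A wedge is closed if the edge joining its two non-shared endpoints is in the graph. $G_t$ is the graph on edges $\{e_1,\dots,e_t\}$. Algorithm Single-Bit (with reservoir size $s$): it maintains a reservoir $\mathcal{R}_t=(r_1,\dots,r_s)$ of $s$ edge slots. At each time $t=1,\dots,m$, each slot of $\mathcal{R}_{t-1}$ is independently replaced by $e_t$ with probability $1/t$, giving $\mathcal{R}_t$ (so at $t=1$ all slots hold $e_1$). $\mathcal{W}_t$ is the multiset of wedges $\{r_i,r_j\}$, $i<j$, formed by pairs of slots of $\mathcal{R}_t$ (one element per slot pair forming a wedge). $\mathcal{D}_t$ is the set of elements of $\mathcal{W}_t$ closed by $e_t$ (i.e. $e_t$ joins the two non-shared endpoints). With $\mathcal{C}_0=\emptyset$, set $\mathcal{C}_t = (\mathcal{C}_{t-1}\cap\mathcal{W}_t)\cup\mathcal{D}_t$.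 If $\mathcal{W}_t$ is empty, output $b_t=0$; otherwise pick a uniformly random element of $\mathcal{W}_t$ and output $b_t=1$ if it lies in $\mathcal{C}_t$ and $b_t=0$ otherwise. The expectation is over the randomness of the algorithm; the stream order is arbitrary but fixed. *)

theory Defs
  imports "HOL-Probability.Probability"
begin

type_synonym edge = "nat set"

definition is_edge :: "edge \<Rightarrow> bool" where
  "is_edge e \<longleftrightarrow> card e = 2"

definition is_wedge :: "edge \<Rightarrow> edge \<Rightarrow> bool" where
  "is_wedge e f \<longleftrightarrow> e \<noteq> f \<and> card (e \<inter> f) = 1"

definition closing_edge :: "edge \<Rightarrow> edge \<Rightarrow> edge" where
  "closing_edge e f = (e \<union> f) - (e \<inter> f)"

definition num_wedges :: "edge set \<Rightarrow> nat" where
  "num_wedges E = card {{e, f} | e f. e \<in> E \<and> f \<in> E \<and> is_wedge e f}"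

definition num_triangles :: "edge set \<Rightarrow> nat" where
  "num_triangles E = card {X :: nat set. card X = 3 \<and>
      (\<forall>x\<in>X. \<forall>y\<in>X. x \<noteq> y \<longrightarrow> {x, y} \<in> E)}"

text \<open>Reservoir: slots 0..s-1, a state is the reservoir together with the set
  C of slot pairs (i,j), i<j, whose wedge is marked closed.\<close>
type_synonym state = "(nat \<Rightarrow> edge) \<times> (nat \<times> nat) set"

text \<open>The wedge multiset W_t, represented by the slot pairs forming a wedge.\<close>
definition wedge_pairs :: "nat \<Rightarrow> (nat \<Rightarrow> edge) \<Rightarrow> (nat \<times> nat) set" where
  "wedge_pairs s R = {(i, j). i < j \<and> j < s \<and> is_wedge (R i) (R j)}"

definition sb_step :: "nat \<Rightarrow> nat \<Rightarrow> edge \<Rightarrow> state \<Rightarrow> state pmf" where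
  "sb_step s t e st =
     map_pmf (\<lambda>mask.
        let R = fst st; C = snd st;
            R' = (\<lambda>i. if mask i then e else R i);
            W' = wedge_pairs s R';
            D = {(i, j) \<in> W'. e = closing_edge (R' i) (R' j)};
            Ckeep = {(i, j) \<in> C \<inter> W'. \<not> mask i \<and> \<not> mask j}
        in (R', Ckeep \<union> D))
     (Pi_pmf {..<s} False (\<lambda>_. bernoulli_pmf (1 / real t)))"

fun sb_state :: "nat \<Rightarrow> edge list \<Rightarrow> nat \<Rightarrow> state pmf" where
  "sb_state s es 0 = return_pmf (\<lambda>_. {}, {})"
| "sb_state s es (Suc t) = sb_state s es t \<bind> sb_step s (Suc t) (es ! t)"

definition sb_output :: "nat \<Rightarrow> state \<Rightarrow> bool pmf" where
  "sb_output s st =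
     (if wedge_pairs s (fst st) = {} then return_pmf False
      else map_pmf (\<lambda>p. p \<in> snd st) (pmf_of_set (wedge_pairs s (fst st))))"

definition sb_final_bit :: "nat \<Rightarrow> edge list \<Rightarrow> bool pmf" where
  "sb_final_bit s es = sb_state s es (length es) \<bind> sb_output s"

definition sb_est :: "nat \<Rightarrow> nat \<Rightarrow> state \<Rightarrow> real" where
  "sb_est s m st = real m ^ 2 * real (card (wedge_pairs s (fst st))) / (real s * (real s - 1))"

end

theory Submission
  imports Defs
begin

text \<open>At every time \<open>t\<close> the reservoir slots are independent uniform samples of the first
  \<open>t\<close> edges, and a slot wedge is marked closed iff its closing edge arrived after both of its
  edges. Hence \<open>|W_m|\<close> and \<open>|C_m|\<close> are U-statistics of order two in \<open>s\<close> i.i.d. uniform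
  edges, with means \<open>s(s-1)W/m\<^sup>2\<close> and \<open>s(s-1)T/m\<^sup>2\<close>: every triangle carries exactly one
  closed wedge, the one whose closing edge arrives last. Their variances are at most the mean
  plus \<open>4s\<^sup>3\<close> times the second moment of \<open>d(e)/m\<close>, where \<open>d(e)\<close> is the number of wedges
  containing a uniform edge \<open>e\<close>; and \<open>d(e) \<le> 5\<surd>W\<close> because a vertex of degree \<open>k\<close> already
  carries \<open>k choose 2\<close> wedges. For \<open>s \<ge> c m/(\<beta>\<^sup>3\<surd>T)\<close> Chebyshev's inequality
  therefore keeps both counts within a small multiple of \<open>\<beta>\<close> times the mean of \<open>|W_m|\<close>,
  which yields the estimate and, through the ratio \<open>|C_m|/|W_m|\<close> that the output bit
  samples, its bias bound.\<close>

section \<open>Expectations under product distributions\<close>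

lemma expectation_bind_pmf_finite:
  fixes h :: "'b \<Rightarrow> real"
  assumes "finite (set_pmf p)" "\<And>x. x \<in> set_pmf p \<Longrightarrow> finite (set_pmf (f x))"
  shows "measure_pmf.expectation (p \<bind> f) h =
         measure_pmf.expectation p (\<lambda>x. measure_pmf.expectation (f x) h)"
proof -
  have "measure_pmf.expectation (p \<bind> f) h =
        (\<Sum>a\<in>set_pmf p. pmf p a *\<^sub>R measure_pmf.expectation (f a) h)"
    using assms by (intro pmf_expectation_bind) auto
  also have "\<dots> = measure_pmf.expectation p (\<lambda>x. measure_pmf.expectation (f x) h)"
    using assms by (subst integral_measure_pmf[of "set_pmf p"]) (auto simp: mult.commute)
  finally show ?thesis .
qed

lemma prob_bind_pmf_finite:
  assumes "finite (set_pmf p)" "\<And>x. x \<in> set_pmf p \<Longrightarrow> finite (set_pmf (f x))"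
  shows "measure_pmf.prob (p \<bind> f) A = measure_pmf.expectation p (\<lambda>x. measure_pmf.prob (f x) A)"
  using expectation_bind_pmf_finite[OF assms, where h = "indicator A"] by simp

lemma finite_set_Pi_pmf:
  assumes "finite A" "\<And>x. x \<in> A \<Longrightarrow> finite (set_pmf (p x))"
  shows "finite (set_pmf (Pi_pmf A d p))"
proof -
  have "finite (PiE_dflt A d (set_pmf \<circ> p))"
    using assms by (intro finite_PiE_dflt) auto
  thus ?thesis using set_Pi_pmf_subset'[OF assms(1), of d p] finite_subset by blast
qed

lemma expectation_Pi_pmf_remove:
  fixes h :: "('a \<Rightarrow> 'b) \<Rightarrow> real"
  assumes "finite A" "x \<in> A" "\<And>x. x \<in> A \<Longrightarrow> finite (set_pmf (p x))"
  shows "measure_pmf.expectation (Pi_pmf A d p) h =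
         measure_pmf.expectation (p x)
           (\<lambda>y. measure_pmf.expectation (Pi_pmf (A - {x}) d p) (\<lambda>f. h (f(x := y))))"
proof -
  have A: "A = insert x (A - {x})" using assms by auto
  have fin: "finite (set_pmf (Pi_pmf (A - {x}) d p))"
    using assms by (intro finite_set_Pi_pmf) auto
  have "Pi_pmf A d p = p x \<bind> (\<lambda>y. Pi_pmf (A - {x}) d p \<bind> (\<lambda>f. return_pmf (f(x := y))))"
    by (subst A, subst Pi_pmf_insert') (use assms in auto)
  also have "measure_pmf.expectation \<dots> h =
      measure_pmf.expectation (p x) (\<lambda>y. measure_pmf.expectation
        (Pi_pmf (A - {x}) d p \<bind> (\<lambda>f. return_pmf (f(x := y)))) h)"
    using assms fin by (intro expectation_bind_pmf_finite) auto
  also have "\<dots> = measure_pmf.expectation (p x)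
      (\<lambda>y. measure_pmf.expectation (Pi_pmf (A - {x}) d p) (\<lambda>f. h (f(x := y))))"
    using fin by (simp add: expectation_bind_pmf_finite)
  finally show ?thesis .
qed

lemma expectation_Pi_pmf_coord:
  fixes h :: "'b \<Rightarrow> real"
  assumes "finite A" "i \<in> A" "finite (set_pmf u)"
  shows "measure_pmf.expectation (Pi_pmf A d (\<lambda>_. u)) (\<lambda>R. h (R i)) =
         measure_pmf.expectation u h"
  by (subst expectation_Pi_pmf_remove[of A i]) (use assms in \<open>auto simp: measure_pmf.prob_space\<close>)

lemma expectation_Pi_pmf_coords2:
  fixes h :: "'b \<Rightarrow> 'b \<Rightarrow> real"
  assumes "finite A" "i \<in> A" "j \<in> A" "i \<noteq> j" "finite (set_pmf u)"
  shows "measure_pmf.expectation (Pi_pmf A d (\<lambda>_. u)) (\<lambda>R. h (R i) (R j)) =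
         measure_pmf.expectation u (\<lambda>a. measure_pmf.expectation u (\<lambda>b. h a b))"
  using assms
  by (subst expectation_Pi_pmf_remove[of A i])
     (auto intro!: Bochner_Integration.integral_cong simp: expectation_Pi_pmf_coord)

lemma expectation_Pi_pmf_coords3:
  fixes h :: "'b \<Rightarrow> 'b \<Rightarrow> 'b \<Rightarrow> real"
  assumes "finite A" "i \<in> A" "j \<in> A" "k \<in> A" "distinct [i, j, k]" "finite (set_pmf u)"
  shows "measure_pmf.expectation (Pi_pmf A d (\<lambda>_. u)) (\<lambda>R. h (R i) (R j) (R k)) =
         measure_pmf.expectation u (\<lambda>a. measure_pmf.expectation u
           (\<lambda>b. measure_pmf.expectation u (\<lambda>c. h a b c)))"
  using assms
  by (subst expectation_Pi_pmf_remove[of A i])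
     (auto intro!: Bochner_Integration.integral_cong simp: expectation_Pi_pmf_coords2)

lemma expectation_Pi_pmf_coords4:
  fixes h :: "'b \<Rightarrow> 'b \<Rightarrow> 'b \<Rightarrow> 'b \<Rightarrow> real"
  assumes "finite A" "i \<in> A" "j \<in> A" "k \<in> A" "l \<in> A" "distinct [i, j, k, l]"
    "finite (set_pmf u)"
  shows "measure_pmf.expectation (Pi_pmf A d (\<lambda>_. u)) (\<lambda>R. h (R i) (R j) (R k) (R l)) =
         measure_pmf.expectation u (\<lambda>a. measure_pmf.expectation u
           (\<lambda>b. measure_pmf.expectation u (\<lambda>c. measure_pmf.expectation u (\<lambda>e. h a b c e))))"
  using assms
  by (subst expectation_Pi_pmf_remove[of A i])
     (auto intro!: Bochner_Integration.integral_cong simp: expectation_Pi_pmf_coords3)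

section \<open>Pair counts of a bounded symmetric kernel\<close>

definition slot_pairs :: "nat \<Rightarrow> (nat \<times> nat) set" where
  "slot_pairs s = {(i, j). i < j \<and> j < s}"

definition pair_count :: "nat \<Rightarrow> ('b \<Rightarrow> 'b \<Rightarrow> real) \<Rightarrow> (nat \<Rightarrow> 'b) \<Rightarrow> real" where
  "pair_count s g R = (\<Sum>p\<in>slot_pairs s. g (R (fst p)) (R (snd p)))"

definition kernel_mean :: "'b pmf \<Rightarrow> ('b \<Rightarrow> 'b \<Rightarrow> real) \<Rightarrow> real" where
  "kernel_mean u g = measure_pmf.expectation u (\<lambda>a. measure_pmf.expectation u (\<lambda>b. g a b))"

definition kernel_degree_moment :: "'b pmf \<Rightarrow> ('b \<Rightarrow> 'b \<Rightarrow> real) \<Rightarrow> real" where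
  "kernel_degree_moment u g = measure_pmf.expectation u (\<lambda>a. (measure_pmf.expectation u (\<lambda>b. g a b))\<^sup>2)"

lemma finite_slot_pairs: "finite (slot_pairs s)"
  by (rule finite_subset[of _ "{..<s} \<times> {..<s}"]) (auto simp: slot_pairs_def)

lemma card_slot_pairs: "2 * card (slot_pairs s) = s * (s - 1)"
proof (induction s)
  case (Suc s)
  have "slot_pairs (Suc s) = slot_pairs s \<union> (\<lambda>i. (i, s)) ` {..<s}"
    by (auto simp: slot_pairs_def)
  moreover have "card (slot_pairs s \<union> (\<lambda>i. (i, s)) ` {..<s}) = card (slot_pairs s) + s"
    using finite_slot_pairs[of s, unfolded slot_pairs_def]
    by (subst card_Un_disjoint) (auto simp: slot_pairs_def card_image inj_on_def)
  ultimately show ?case using Suc.IH by (cases s) (auto simp: algebra_simps)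
qed (simp add: slot_pairs_def)

lemma card_slot_pairs_le: "card (slot_pairs s) \<le> s\<^sup>2"
  using card_slot_pairs[of s] by (simp add: power2_eq_square)
    (metis diff_le_self le_add2 mult_2 mult_le_mono2 order_trans)

lemma real_card_slot_pairs: "real (card (slot_pairs s)) = real s * (real s - 1) / 2"
proof (cases s)
  case (Suc n)
  have "real (2 * card (slot_pairs s)) = real (s * (s - 1))" by (simp only: card_slot_pairs)
  thus ?thesis using Suc by (simp add: algebra_simps)
qed (simp add: slot_pairs_def)

definition share_slot :: "nat \<times> nat \<Rightarrow> nat \<times> nat \<Rightarrow> bool" where
  "share_slot p q \<longleftrightarrow> fst p \<in> {fst q, snd q} \<or> snd p \<in> {fst q, snd q}"

lemma card_slot_pairs_sharing:
  "card {q \<in> slot_pairs s. p \<noteq> q \<and> share_slot p q} \<le> 4 * s"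
proof -
  let ?V = "{fst p, snd p}"
  have "card {q \<in> slot_pairs s. p \<noteq> q \<and> share_slot p q} \<le> card (?V \<times> {..<s} \<union> {..<s} \<times> ?V)"
    by (intro card_mono) (auto simp: slot_pairs_def share_slot_def)
  also have "\<dots> \<le> card (?V \<times> {..<s}) + card ({..<s} \<times> ?V)"
    by (rule card_Un_le)
  also have "\<dots> \<le> 2 * s + s * 2"
    by (intro add_mono) (auto simp: card_cartesian_product card_insert_if)
  finally show ?thesis by simp
qed

locale bounded_symmetric_kernel =
  fixes u :: "'b pmf" and g :: "'b \<Rightarrow> 'b \<Rightarrow> real"
  assumes finite_support: "finite (set_pmf u)"
    and sym: "g a b = g b a"
    and nonneg: "0 \<le> g a b" and le_one: "g a b \<le> 1"
begin

abbreviation sample :: "nat \<Rightarrow> 'b \<Rightarrow> (nat \<Rightarrow> 'b) pmf" where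
  "sample s d \<equiv> Pi_pmf {..<s} d (\<lambda>_. u)"

lemma finite_set_sample: "finite (set_pmf (sample s d))"
  by (rule finite_set_Pi_pmf) (use finite_support in auto)

lemma integrable_sample [simp]: "integrable (measure_pmf (sample s d)) (f :: _ \<Rightarrow> real)"
  by (rule integrable_measure_pmf_finite[OF finite_set_sample])

lemma kernel_mean_nonneg: "0 \<le> kernel_mean u g"
  unfolding kernel_mean_def by (intro Bochner_Integration.integral_nonneg nonneg)

lemma kernel_degree_moment_nonneg: "0 \<le> kernel_degree_moment u g"
  unfolding kernel_degree_moment_def by (intro Bochner_Integration.integral_nonneg) auto

lemma expectation_kernel_pair:
  "p \<in> slot_pairs s \<Longrightarrow>
   measure_pmf.expectation (sample s d) (\<lambda>R. g (R (fst p)) (R (snd p))) = kernel_mean u g"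
  unfolding kernel_mean_def
  by (rule expectation_Pi_pmf_coords2) (use finite_support in \<open>auto simp: slot_pairs_def\<close>)

lemma expectation_pair_count:
  "measure_pmf.expectation (sample s d) (pair_count s g) = card (slot_pairs s) * kernel_mean u g"
  unfolding pair_count_def
  by (subst Bochner_Integration.integral_sum) (simp_all add: expectation_kernel_pair)

lemma expectation_kernel_wedge:
  assumes "distinct [a, b, c]" "a < s" "b < s" "c < s"
  shows "measure_pmf.expectation (sample s d) (\<lambda>R. g (R a) (R b) * g (R a) (R c)) =
         kernel_degree_moment u g"
  using assms finite_support
  by (subst expectation_Pi_pmf_coords3) (auto simp: kernel_degree_moment_def power2_eq_square)

lemma expectation_kernel_disjoint:
  assumes "distinct [a, b, c, e]" "a < s" "b < s" "c < s" "e < s"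
  shows "measure_pmf.expectation (sample s d) (\<lambda>R. g (R a) (R b) * g (R c) (R e)) =
         (kernel_mean u g)\<^sup>2"
  using assms finite_support
  by (subst expectation_Pi_pmf_coords4) (auto simp: kernel_mean_def power2_eq_square)

text \<open>Covariance structure of the pair count: identical pairs contribute the mean, pairs
  sharing one slot the degree moment, disjoint pairs are independent.\<close>
lemma expectation_kernel_product_le:
  assumes "p \<in> slot_pairs s" "q \<in> slot_pairs s"
  shows "measure_pmf.expectation (sample s d)
           (\<lambda>R. g (R (fst p)) (R (snd p)) * g (R (fst q)) (R (snd q)))
         \<le> (if p = q then kernel_mean u g else 0)
           + (if p \<noteq> q \<and> share_slot p q then kernel_degree_moment u g else 0)
           + (kernel_mean u g)\<^sup>2"
proof -
  obtain i j k l where p: "p = (i, j)" and q: "q = (k, l)"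
    and ij: "i < j" "j < s" and kl: "k < l" "l < s"
    using assms by (cases p, cases q) (auto simp: slot_pairs_def)
  let ?E = "measure_pmf.expectation (sample s d)
              (\<lambda>R. g (R (fst p)) (R (snd p)) * g (R (fst q)) (R (snd q)))"
  consider "p = q" | "p \<noteq> q" "share_slot p q" | "\<not> share_slot p q"
    by blast
  then show ?thesis
  proof cases
    case 1
    have "?E \<le> measure_pmf.expectation (sample s d) (\<lambda>R. g (R (fst p)) (R (snd p)))"
      using 1 by (intro integral_mono) (auto intro: mult_left_le le_one nonneg)
    also have "\<dots> = kernel_mean u g" using assms(1) by (rule expectation_kernel_pair)
    finally show ?thesis using 1 by (simp add: add_increasing2)
  next
    case 2
    have "?E = kernel_degree_moment u g"
    proof -
      consider "i = k" | "i = l" | "j = k" | "j = l"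
        using 2 by (auto simp: share_slot_def p q)
      then show ?thesis
        using 2 ij kl expectation_kernel_wedge[of i j l s d] expectation_kernel_wedge[of i j k s d]
          expectation_kernel_wedge[of j i l s d] expectation_kernel_wedge[of j i k s d]
        by cases (auto simp: p q sym)
    qed
    thus ?thesis using 2 kernel_mean_nonneg by simp
  next
    case 3
    hence "?E = (kernel_mean u g)\<^sup>2"
      using ij kl unfolding p q share_slot_def by (intro expectation_kernel_disjoint) auto
    thus ?thesis using 3 by (auto simp: share_slot_def)
  qed
qed

lemma expectation_pair_count_sq_le:
  "measure_pmf.expectation (sample s d) (\<lambda>R. (pair_count s g R)\<^sup>2)
   \<le> card (slot_pairs s) * kernel_mean u g + 4 * real s ^ 3 * kernel_degree_moment u g
     + (card (slot_pairs s) * kernel_mean u g)\<^sup>2"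
proof -
  let ?P = "slot_pairs s" and ?\<gamma> = "kernel_mean u g" and ?\<eta> = "kernel_degree_moment u g"
  let ?N = "\<lambda>p. {q \<in> ?P. p \<noteq> q \<and> share_slot p q}"
  have sq: "(pair_count s g R)\<^sup>2 =
      (\<Sum>p\<in>?P. \<Sum>q\<in>?P. g (R (fst p)) (R (snd p)) * g (R (fst q)) (R (snd q)))" for R
    unfolding pair_count_def power2_eq_square by (rule sum_product)
  have "measure_pmf.expectation (sample s d) (\<lambda>R. (pair_count s g R)\<^sup>2) =
      (\<Sum>p\<in>?P. \<Sum>q\<in>?P. measure_pmf.expectation (sample s d)
         (\<lambda>R. g (R (fst p)) (R (snd p)) * g (R (fst q)) (R (snd q))))"
    unfolding sq by (simp add: Bochner_Integration.integral_sum)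
  also have "\<dots> \<le> (\<Sum>p\<in>?P. \<Sum>q\<in>?P. (if p = q then ?\<gamma> else 0)
      + (if p \<noteq> q \<and> share_slot p q then ?\<eta> else 0) + ?\<gamma>\<^sup>2)"
    by (intro sum_mono expectation_kernel_product_le)
  also have "\<dots> = (\<Sum>p\<in>?P. ?\<gamma> + card (?N p) * ?\<eta> + card ?P * ?\<gamma>\<^sup>2)"
    by (intro sum.cong refl)
       (simp add: sum.distrib finite_slot_pairs sum.If_cases Int_def conj_commute)
  also have "\<dots> \<le> (\<Sum>p\<in>?P. ?\<gamma> + (4 * s) * ?\<eta> + card ?P * ?\<gamma>\<^sup>2)"
    using card_slot_pairs_sharing kernel_degree_moment_nonneg
    by (intro sum_mono add_mono mult_right_mono order.refl) (simp_all only: of_nat_le_iff)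
  also have "\<dots> = card ?P * ?\<gamma> + card ?P * (4 * s) * ?\<eta> + (card ?P * ?\<gamma>)\<^sup>2"
    by (simp add: algebra_simps power2_eq_square)
  also have "\<dots> \<le> card ?P * ?\<gamma> + 4 * real s ^ 3 * ?\<eta> + (card ?P * ?\<gamma>)\<^sup>2"
  proof -
    have "real (card ?P) \<le> real s ^ 2"
      using card_slot_pairs_le by (metis of_nat_le_iff of_nat_power)
    hence "real (card ?P) * (4 * s) * ?\<eta> \<le> real s ^ 2 * (4 * s) * ?\<eta>"
      using kernel_degree_moment_nonneg by (intro mult_right_mono) auto
    thus ?thesis by (simp add: power3_eq_cube power2_eq_square algebra_simps)
  qed
  finally show ?thesis .
qed

lemma variance_pair_count_le:
  "measure_pmf.variance (sample s d) (pair_count s g)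
   \<le> card (slot_pairs s) * kernel_mean u g + 4 * real s ^ 3 * kernel_degree_moment u g"
  using expectation_pair_count_sq_le[of s d]
  by (subst measure_pmf.variance_eq) (simp_all add: expectation_pair_count)

lemma prob_pair_count_deviation:
  assumes "a > 0"
  shows "measure_pmf.prob (sample s d)
           {R. a \<le> \<bar>pair_count s g R - card (slot_pairs s) * kernel_mean u g\<bar>}
         \<le> (card (slot_pairs s) * kernel_mean u g + 4 * real s ^ 3 * kernel_degree_moment u g) / a\<^sup>2"
proof -
  have "measure_pmf.prob (sample s d)
          {R. a \<le> \<bar>pair_count s g R - measure_pmf.expectation (sample s d) (pair_count s g)\<bar>}
        \<le> measure_pmf.variance (sample s d) (pair_count s g) / a\<^sup>2"
    using measure_pmf.Chebyshev_inequality[where M = "sample s d" and f = "pair_count s g"] assms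
    by simp
  also have "\<dots> \<le> (card (slot_pairs s) * kernel_mean u g
                    + 4 * real s ^ 3 * kernel_degree_moment u g) / a\<^sup>2"
    using variance_pair_count_le by (intro divide_right_mono) auto
  finally show ?thesis by (simp add: expectation_pair_count)
qed

end

section \<open>The state of Single-Bit\<close>

definition closed_before :: "edge list \<Rightarrow> nat \<Rightarrow> edge \<Rightarrow> edge \<Rightarrow> bool" where
  "closed_before es t e f \<longleftrightarrow>
     (\<exists>k<t. es ! k = closing_edge e f \<and> e \<in> set (take k es) \<and> f \<in> set (take k es))"

definition closed_pairs :: "nat \<Rightarrow> edge list \<Rightarrow> nat \<Rightarrow> (nat \<Rightarrow> edge) \<Rightarrow> (nat \<times> nat) set" where
  "closed_pairs s es t R = {(i, j) \<in> wedge_pairs s R. closed_before es t (R i) (R j)}"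

definition reservoir_pmf :: "nat \<Rightarrow> edge list \<Rightarrow> nat \<Rightarrow> (nat \<Rightarrow> edge) pmf" where
  "reservoir_pmf s es t = Pi_pmf {..<s} {} (\<lambda>_. pmf_of_set (set (take t es)))"

definition replacement_pmf :: "nat \<Rightarrow> nat \<Rightarrow> (nat \<Rightarrow> bool) pmf" where
  "replacement_pmf s t = Pi_pmf {..<s} False (\<lambda>_. bernoulli_pmf (1 / real t))"

lemma closing_edge_commute: "closing_edge e f = closing_edge f e"
  by (simp add: closing_edge_def Un_commute Int_commute)

lemma closed_before_commute: "closed_before es t e f = closed_before es t f e"
  unfolding closed_before_def by (auto simp: closing_edge_commute)

lemma closing_edge_neq:
  assumes "is_edge e" "is_edge f" "is_wedge e f"
  shows "closing_edge e f \<noteq> e" "closing_edge e f \<noteq> f"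
proof -
  have "card e = 2" "card f = 2" "card (e \<inter> f) = 1"
    using assms by (auto simp: is_edge_def is_wedge_def)
  hence "e \<inter> f \<noteq> e" "e \<inter> f \<noteq> f" by auto
  thus "closing_edge e f \<noteq> e" "closing_edge e f \<noteq> f"
    unfolding closing_edge_def by blast+
qed

lemma set_reservoir_pmf:
  assumes "R \<in> set_pmf (reservoir_pmf s es t)" "1 \<le> t" "t \<le> length es"
  shows "i < s \<Longrightarrow> R i \<in> set (take t es)" "\<not> i < s \<Longrightarrow> R i = {}"
proof -
  have "set (take t es) \<noteq> {}" using assms by (cases es) (auto simp: take_Suc_conv_app_nth)
  moreover have "R \<in> PiE_dflt {..<s} {} (set_pmf \<circ> (\<lambda>_. pmf_of_set (set (take t es))))"
    using set_Pi_pmf_subset'[of "{..<s}" "{}" "\<lambda>_. pmf_of_set (set (take t es))"] assms(1)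
    unfolding reservoir_pmf_def by auto
  ultimately show "i < s \<Longrightarrow> R i \<in> set (take t es)" "\<not> i < s \<Longrightarrow> R i = {}"
    by (auto simp: PiE_dflt_def)
qed

lemma set_replacement_pmf:
  assumes "msk \<in> set_pmf (replacement_pmf s t)" "\<not> i < s"
  shows "\<not> msk i"
proof -
  have "msk \<in> PiE_dflt {..<s} False (set_pmf \<circ> (\<lambda>_. bernoulli_pmf (1 / real t)))"
    using set_Pi_pmf_subset'[of "{..<s}" False "\<lambda>_. bernoulli_pmf (1 / real t)"] assms(1)
    unfolding replacement_pmf_def by auto
  thus ?thesis using assms(2) by (auto simp: PiE_dflt_def)
qed

lemma pmf_of_set_insert_eq_bernoulli:
  assumes "finite S" "S \<noteq> {}" "e \<notin> S"
  shows "pmf_of_set (insert e S) =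
    bernoulli_pmf (1 / real (Suc (card S))) \<bind> (\<lambda>b. if b then return_pmf e else pmf_of_set S)"
proof (rule pmf_eqI)
  fix x
  have n: "card S > 0" using assms by (simp add: card_gt_0_iff)
  have "pmf (bernoulli_pmf (1 / real (Suc (card S))) \<bind>
          (\<lambda>b. if b then return_pmf e else pmf_of_set S)) x
     = indicator {e} x * (1 / real (Suc (card S)))
       + indicator S x / card S * (1 - 1 / real (Suc (card S)))"
    using assms by (simp add: pmf_bind pmf_of_set indicator_def)
  also have "\<dots> = pmf (pmf_of_set (insert e S)) x"
    using assms n by (cases "x = e") (auto simp: indicator_def field_simps pmf_of_set)
  finally show "pmf (pmf_of_set (insert e S)) x = pmf (bernoulli_pmf (1 / real (Suc (card S))) \<bind>
      (\<lambda>b. if b then return_pmf e else pmf_of_set S)) x" ..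
qed

lemma pmf_of_set_set_take_Suc:
  assumes "distinct es" "1 \<le> t" "t < length es"
  shows "pmf_of_set (set (take (Suc t) es)) = bernoulli_pmf (1 / real (Suc t)) \<bind>
           (\<lambda>b. if b then return_pmf (es ! t) else pmf_of_set (set (take t es)))"
proof -
  have "set (take (Suc t) es) = insert (es ! t) (set (take t es))"
    using assms by (simp add: take_Suc_conv_app_nth)
  moreover have "es ! t \<notin> set (take t es)" "set (take t es) \<noteq> {}" "card (set (take t es)) = t"
    using assms by (auto simp: distinct_conv_nth in_set_conv_nth distinct_card)
  ultimately show ?thesis by (simp add: pmf_of_set_insert_eq_bernoulli)
qed

text \<open>Reservoir sampling: replacing each slot by the new edge with probability \<open>1/(t+1)\<close>
  turns independent uniform samples of the first \<open>t\<close> edges into independent uniform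
  samples of the first \<open>t + 1\<close> edges.\<close>
lemma reservoir_pmf_Suc:
  assumes "distinct es" "1 \<le> t" "t < length es"
  shows "reservoir_pmf s es (Suc t) = reservoir_pmf s es t \<bind> (\<lambda>R. replacement_pmf s (Suc t) \<bind>
           (\<lambda>msk. return_pmf (\<lambda>i. if msk i then es ! t else R i)))"
proof -
  define S where "S = set (take t es)"
  define e where "e = es ! t"
  define q where "q = (\<lambda>b. if b then return_pmf e else pmf_of_set S)"
  have "reservoir_pmf s es (Suc t) =
        Pi_pmf {..<s} {} (\<lambda>_. bernoulli_pmf (1 / real (Suc t)) \<bind> q)"
    unfolding reservoir_pmf_def q_def S_def e_def using assms by (simp add: pmf_of_set_set_take_Suc)
  also have "\<dots> = replacement_pmf s (Suc t) \<bind> (\<lambda>msk. Pi_pmf {..<s} {} (\<lambda>i. q (msk i)))"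
    unfolding replacement_pmf_def by (rule Pi_pmf_bind) auto
  also have "\<dots> = replacement_pmf s (Suc t) \<bind> (\<lambda>msk. Pi_pmf {..<s} {}
      (\<lambda>i. pmf_of_set S \<bind> (\<lambda>r. return_pmf (if msk i then e else r))))"
    by (intro bind_pmf_cong refl Pi_pmf_cong) (auto simp: q_def bind_return_pmf')
  also have "\<dots> = replacement_pmf s (Suc t) \<bind> (\<lambda>msk. reservoir_pmf s es t \<bind>
      (\<lambda>R. return_pmf (\<lambda>i. if i \<in> {..<s} then if msk i then e else R i else {})))"
    unfolding reservoir_pmf_def S_def[symmetric]
    by (intro bind_pmf_cong refl, subst Pi_pmf_bind[where d' = "{}"]) auto
  also have "\<dots> = replacement_pmf s (Suc t) \<bind> (\<lambda>msk. reservoir_pmf s es t \<bind>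
      (\<lambda>R. return_pmf (\<lambda>i. if msk i then e else R i)))"
  proof (intro bind_pmf_cong refl arg_cong[where f = return_pmf] ext)
    fix msk R i
    assume "msk \<in> set_pmf (replacement_pmf s (Suc t))" "R \<in> set_pmf (reservoir_pmf s es t)"
    then show "(if i \<in> {..<s} then if msk i then e else R i else {}) = (if msk i then e else R i)"
      using set_replacement_pmf[of msk s "Suc t" i] set_reservoir_pmf(2)[of R s es t i] assms
      by (cases "i < s") auto
  qed
  also have "\<dots> = reservoir_pmf s es t \<bind> (\<lambda>R. replacement_pmf s (Suc t) \<bind>
      (\<lambda>msk. return_pmf (\<lambda>i. if msk i then e else R i)))"
    by (rule bind_commute_pmf)
  finally show ?thesis unfolding e_def .
qed

lemma closed_before_Suc:
  "closed_before es (Suc t) e f \<longleftrightarrow> closed_before es t e f \<or>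
     (es ! t = closing_edge e f \<and> e \<in> set (take t es) \<and> f \<in> set (take t es))"
  by (auto simp: closed_before_def less_Suc_eq)

lemma closed_before_imp_in_set_take:
  "closed_before es t e f \<Longrightarrow> e \<in> set (take t es)"
  unfolding closed_before_def by (meson less_imp_le set_take_subset_set_take subsetD)

text \<open>The left-hand side is the marked set that sb_step computes at time \<open>t + 1\<close>.\<close>
lemma closed_pairs_Suc:
  fixes msk :: "nat \<Rightarrow> bool" and R :: "nat \<Rightarrow> edge"
  assumes dist: "distinct es" and t: "t < length es" and edges: "\<forall>e\<in>set es. is_edge e"
    and R: "\<And>i. i < s \<Longrightarrow> R i \<in> set (take t es)"
  defines "e \<equiv> es ! t"
  defines "R' \<equiv> (\<lambda>i. if msk i then e else R i)"
  shows "{(i, j) \<in> closed_pairs s es t R \<inter> wedge_pairs s R'. \<not> msk i \<and> \<not> msk j} \<union>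
         {(i, j) \<in> wedge_pairs s R'. e = closing_edge (R' i) (R' j)} = closed_pairs s es (Suc t) R'"
proof (intro set_eqI, clarify)
  fix i j
  have "e \<notin> set (take t es)"
    using dist t by (simp add: e_def distinct_conv_nth in_set_conv_nth)
  then show "(i, j) \<in> {(i, j) \<in> closed_pairs s es t R \<inter> wedge_pairs s R'. \<not> msk i \<and> \<not> msk j} \<union>
         {(i, j) \<in> wedge_pairs s R'. e = closing_edge (R' i) (R' j)} \<longleftrightarrow>
       (i, j) \<in> closed_pairs s es (Suc t) R'"
  proof (cases "msk i \<or> msk j")
    case True
    have "is_edge (R' i)" if "i < s" for i
      using R[OF that] t edges unfolding R'_def e_def by (auto dest: in_set_takeD)
    hence "e \<noteq> closing_edge (R' i) (R' j)" if "(i, j) \<in> wedge_pairs s R'"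
      using that True closing_edge_neq[of "R' i" "R' j"] by (auto simp: wedge_pairs_def R'_def)
    moreover have "\<not> closed_before es (Suc t) (R' i) (R' j)"
      using True \<open>e \<notin> set (take t es)\<close> closed_before_imp_in_set_take closed_before_commute
      by (auto simp: closed_before_Suc R'_def)
    ultimately show ?thesis using True by (auto simp: closed_pairs_def)
  next
    case False
    thus ?thesis using R
      by (auto simp: closed_pairs_def wedge_pairs_def closed_before_Suc R'_def e_def)
  qed
qed

lemma sb_state_1:
  assumes "es \<noteq> []"
  shows "sb_state s es 1 = map_pmf (\<lambda>R. (R, closed_pairs s es 1 R)) (reservoir_pmf s es 1)"
proof -
  define R1 where "R1 = (\<lambda>i. if i < s then es ! 0 else {})"
  have no_wedges: "wedge_pairs s R1 = {}" by (auto simp: wedge_pairs_def R1_def is_wedge_def)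
  have "bernoulli_pmf 1 = return_pmf True" by (rule pmf_eqI) (auto simp: indicator_def)
  hence replace_all:
    "Pi_pmf {..<s} False (\<lambda>_. bernoulli_pmf (1 / real 1)) = return_pmf (\<lambda>i. i \<in> {..<s})"
    by simp
  have "sb_state s es 1 = sb_step s 1 (es ! 0) (\<lambda>_. {}, {})"
    by (simp add: bind_return_pmf)
  also have "\<dots> = return_pmf (R1, {})"
    unfolding sb_step_def replace_all by (simp add: Let_def no_wedges[unfolded R1_def] R1_def)
  also have "set (take 1 es) = {es ! 0}" using assms by (cases es) auto
  hence "reservoir_pmf s es 1 = return_pmf R1"
    by (simp add: reservoir_pmf_def pmf_of_set_singleton R1_def)
  ultimately show ?thesis by (simp add: closed_pairs_def no_wedges)
qed

lemma sb_state_eq_reservoir: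
  assumes dist: "distinct es" and edges: "\<forall>e\<in>set es. is_edge e"
    and t: "1 \<le> t" "t \<le> length es"
  shows "sb_state s es t = map_pmf (\<lambda>R. (R, closed_pairs s es t R)) (reservoir_pmf s es t)"
  using t
proof (induction t rule: dec_induct)
  case base
  thus ?case using assms by (intro sb_state_1) auto
next
  case (step t)
  have tl: "t < length es" using step by simp
  let ?e = "es ! t" and ?R' = "\<lambda>R msk i. if msk i then es ! t else R i"
  have "sb_state s es (Suc t) =
        reservoir_pmf s es t \<bind> (\<lambda>R. sb_step s (Suc t) ?e (R, closed_pairs s es t R))"
    using step.IH tl by (simp add: bind_map_pmf)
  also have "\<dots> = reservoir_pmf s es t \<bind> (\<lambda>R. replacement_pmf s (Suc t) \<bind>
      (\<lambda>msk. return_pmf (?R' R msk, closed_pairs s es (Suc t) (?R' R msk))))"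
  proof (intro bind_pmf_cong refl)
    fix R assume "R \<in> set_pmf (reservoir_pmf s es t)"
    then have "\<And>i. i < s \<Longrightarrow> R i \<in> set (take t es)"
      using set_reservoir_pmf(1) step.hyps tl by simp
    then show "sb_step s (Suc t) ?e (R, closed_pairs s es t R) = replacement_pmf s (Suc t) \<bind>
      (\<lambda>msk. return_pmf (?R' R msk, closed_pairs s es (Suc t) (?R' R msk)))"
      unfolding sb_step_def replacement_pmf_def[symmetric] map_pmf_def Let_def fst_conv snd_conv
      using closed_pairs_Suc[OF dist tl edges] by (intro bind_pmf_cong refl) simp
  qed
  also have "\<dots> = map_pmf (\<lambda>R. (R, closed_pairs s es (Suc t) R)) (reservoir_pmf s es (Suc t))"
    unfolding reservoir_pmf_Suc[OF dist step.hyps(1) tl] by (simp add: map_bind_pmf)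
  finally show ?case .
qed

section \<open>Wedges and triangles\<close>

definition wedges :: "edge set \<Rightarrow> edge set set" where
  "wedges E = {{e, f} | e f. e \<in> E \<and> f \<in> E \<and> is_wedge e f}"

definition ordered_wedges :: "edge set \<Rightarrow> (edge \<times> edge) set" where
  "ordered_wedges E = {(e, f). e \<in> E \<and> f \<in> E \<and> is_wedge e f}"

definition closed_ordered_wedges :: "edge list \<Rightarrow> (edge \<times> edge) set" where
  "closed_ordered_wedges es =
     {(e, f) \<in> ordered_wedges (set es). closed_before es (length es) e f}"

definition triangles :: "edge set \<Rightarrow> nat set set" where
  "triangles E = {X. card X = 3 \<and> (\<forall>x\<in>X. \<forall>y\<in>X. x \<noteq> y \<longrightarrow> {x, y} \<in> E)}"

lemma num_wedges_eq_card: "num_wedges E = card (wedges E)"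
  by (simp add: num_wedges_def wedges_def)

lemma num_triangles_eq_card: "num_triangles E = card (triangles E)"
  by (simp add: num_triangles_def triangles_def)

lemma is_wedge_commute: "is_wedge e f \<longleftrightarrow> is_wedge f e"
  by (auto simp: is_wedge_def Int_commute)

lemma finite_wedges: "finite E \<Longrightarrow> finite (wedges E)"
  by (rule finite_subset[of _ "Pow E"]) (auto simp: wedges_def)

lemma finite_ordered_wedges: "finite E \<Longrightarrow> finite (ordered_wedges E)"
  by (rule finite_subset[of _ "E \<times> E"]) (auto simp: ordered_wedges_def)

lemma card_ordered_wedges:
  assumes "finite E"
  shows "card (ordered_wedges E) = 2 * num_wedges E"
proof -
  let ?fiber = "\<lambda>w. {p \<in> ordered_wedges E. {fst p, snd p} = w}"
  have "ordered_wedges E = (\<Union>w\<in>wedges E. ?fiber w)"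
    by (auto simp: ordered_wedges_def wedges_def) blast
  also have "card \<dots> = (\<Sum>w\<in>wedges E. card (?fiber w))"
    using finite_ordered_wedges[OF assms] by (intro card_UN_disjoint finite_wedges assms) auto
  also have "\<dots> = (\<Sum>w\<in>wedges E. 2)"
  proof (intro sum.cong refl)
    fix w assume "w \<in> wedges E"
    then obtain e f where w: "w = {e, f}" "e \<in> E" "f \<in> E" "is_wedge e f"
      unfolding wedges_def by blast
    hence "e \<noteq> f" by (simp add: is_wedge_def)
    moreover have "?fiber w = {(e, f), (f, e)}"
      using w \<open>e \<noteq> f\<close> by (auto simp: ordered_wedges_def doubleton_eq_iff is_wedge_commute)
    ultimately show "card (?fiber w) = 2" by simp
  qed
  finally show ?thesis by (simp add: num_wedges_eq_card)
qed

lemma num_wedges_le: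
  assumes "finite E"
  shows "2 * num_wedges E \<le> (card E)\<^sup>2"
proof -
  have "card (ordered_wedges E) \<le> card (E \<times> E)"
    using assms by (intro card_mono) (auto simp: ordered_wedges_def)
  thus ?thesis by (simp add: card_ordered_wedges[OF assms] card_cartesian_product power2_eq_square)
qed

definition arrival :: "edge list \<Rightarrow> edge \<Rightarrow> nat" where
  "arrival es x = the_inv_into {..<length es} ((!) es) x"

lemma
  assumes "distinct es"
  shows arrival_nth: "k < length es \<Longrightarrow> arrival es (es ! k) = k"
    and nth_arrival: "x \<in> set es \<Longrightarrow> es ! arrival es x = x"
    and arrival_less_length: "x \<in> set es \<Longrightarrow> arrival es x < length es"
proof -
  have inj: "inj_on ((!) es) {..<length es}"
    using assms by (auto simp: inj_on_def nth_eq_iff_index_eq)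
  have img: "(!) es ` {..<length es} = set es" by (auto simp: in_set_conv_nth)
  show "k < length es \<Longrightarrow> arrival es (es ! k) = k"
    unfolding arrival_def using the_inv_into_f_f[OF inj] by auto
  show "x \<in> set es \<Longrightarrow> es ! arrival es x = x" "x \<in> set es \<Longrightarrow> arrival es x < length es"
    unfolding arrival_def using the_inv_into_into[OF inj] f_the_inv_into_f[OF inj] img by auto
qed

lemma in_set_take_iff_arrival:
  assumes "distinct es" "k \<le> length es"
  shows "x \<in> set (take k es) \<longleftrightarrow> x \<in> set es \<and> arrival es x < k"
proof
  assume "x \<in> set (take k es)"
  then obtain i where "i < k" "i < length es" "es ! i = x" by (auto simp: in_set_conv_nth)
  thus "x \<in> set es \<and> arrival es x < k" using arrival_nth[OF assms(1)] by auto
next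
  assume "x \<in> set es \<and> arrival es x < k"
  thus "x \<in> set (take k es)" using nth_arrival[OF assms(1), of x] assms
    by (metis in_set_conv_nth length_take min.absorb2 nth_take)
qed

lemma closed_before_length_iff:
  assumes "distinct es" "e \<in> set es" "f \<in> set es"
  shows "closed_before es (length es) e f \<longleftrightarrow> closing_edge e f \<in> set es \<and>
    arrival es e < arrival es (closing_edge e f) \<and> arrival es f < arrival es (closing_edge e f)"
proof
  assume "closed_before es (length es) e f"
  then obtain k where k: "k < length es" "es ! k = closing_edge e f"
    "e \<in> set (take k es)" "f \<in> set (take k es)"
    by (auto simp: closed_before_def)
  thus "closing_edge e f \<in> set es \<and> arrival es e < arrival es (closing_edge e f) \<and>
      arrival es f < arrival es (closing_edge e f)"
    using in_set_take_iff_arrival[OF assms(1), of k] arrival_nth[OF assms(1) k(1)]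
    by (metis less_imp_le nth_mem)
next
  assume "closing_edge e f \<in> set es \<and> arrival es e < arrival es (closing_edge e f) \<and>
      arrival es f < arrival es (closing_edge e f)"
  thus "closed_before es (length es) e f" unfolding closed_before_def
    using nth_arrival[OF assms(1)] arrival_less_length[OF assms(1), of "closing_edge e f"]
      in_set_take_iff_arrival[OF assms(1), of "arrival es (closing_edge e f)"] assms
    by (intro exI[of _ "arrival es (closing_edge e f)"]) auto
qed

lemma triangleE:
  assumes "X \<in> triangles E"
  obtains a b c where "X = {a, b, c}" "a \<noteq> b" "b \<noteq> c" "a \<noteq> c"
    "{{b, c}, {a, c}, {a, b}} \<subseteq> E"
  using assms by (auto simp: triangles_def card_3_iff)

lemma wedge_within_triangle:
  assumes "a \<noteq> b" "b \<noteq> c" "a \<noteq> c"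
    "e \<in> {{b, c}, {a, c}, {a, b}}" "f \<in> {{b, c}, {a, c}, {a, b}}" "e \<noteq> f"
  shows "is_wedge e f" "e \<union> f = {a, b, c}" "closing_edge e f \<in> {{b, c}, {a, c}, {a, b}}"
    "closing_edge e f \<noteq> e" "closing_edge e f \<noteq> f"
  using assms by (auto simp: is_wedge_def closing_edge_def insert_commute)

lemma edge_subset_three:
  assumes "e \<subseteq> {a, b, c}" "card e = 2"
  shows "e \<in> {{b, c}, {a, c}, {a, b}}"
  using assms by (auto simp: card_2_iff insert_commute)

lemma card_3_eqI:
  assumes "finite T" "card T = 3" "{e, f, g} \<subseteq> T" "e \<noteq> f" "e \<noteq> g" "f \<noteq> g"
  shows "T = {e, f, g}"
  using card_subset_eq[OF assms(1,3)] assms by simp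

lemma wedge_union_in_triangles:
  assumes "is_edge e" "is_edge f" "is_wedge e f" "e \<in> E" "f \<in> E" "closing_edge e f \<in> E"
  shows "e \<union> f \<in> triangles E"
proof -
  have c: "card e = 2" "card f = 2" "card (e \<inter> f) = 1" "e \<noteq> f"
    using assms by (auto simp: is_edge_def is_wedge_def)
  then obtain u where u: "e \<inter> f = {u}" by (auto simp: card_1_singleton_iff)
  obtain x y where e: "e = {x, y}" "x \<noteq> y" using c by (auto simp: card_2_iff)
  obtain x' y' where f: "f = {x', y'}" "x' \<noteq> y'" using c by (auto simp: card_2_iff)
  have "\<exists>a. e = {u, a} \<and> a \<noteq> u" using u e by (auto simp: doubleton_eq_iff)
  then obtain a where a: "e = {u, a}" "a \<noteq> u" by blast
  have "\<exists>b. f = {u, b} \<and> b \<noteq> u" using u f by (auto simp: doubleton_eq_iff)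
  then obtain b where b: "f = {u, b}" "b \<noteq> u" by blast
  have ab: "a \<noteq> b" using a b c by auto
  have "closing_edge e f = {a, b}" using a b ab unfolding closing_edge_def by auto
  hence "{u, a} \<in> E" "{a, u} \<in> E" "{u, b} \<in> E" "{b, u} \<in> E" "{a, b} \<in> E" "{b, a} \<in> E"
    using a b assms(4-6) by (simp_all add: insert_commute)
  hence "\<forall>x\<in>{u, a, b}. \<forall>y\<in>{u, a, b}. x \<noteq> y \<longrightarrow> {x, y} \<in> E" by blast
  moreover have "card {u, a, b} = 3" using a b ab by simp
  moreover have "e \<union> f = {u, a, b}" using a b by auto
  ultimately show ?thesis unfolding triangles_def by simp
qed

lemma card_wedges_closed_by:
  assumes "a \<noteq> b" "b \<noteq> c" "a \<noteq> c"
  defines "T3 \<equiv> {{b, c}, {a, c}, {a, b}}"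
  assumes z: "z \<in> T3"
  shows "card {(e, f). e \<in> T3 \<and> f \<in> T3 \<and> e \<noteq> f \<and> closing_edge e f = z} = 2"
proof -
  note T3_wedge = wedge_within_triangle[OF assms(1-3), folded T3_def]
  have "T3 - {z} \<noteq> {}" "card (T3 - {z}) = 2"
    using z assms unfolding T3_def by (auto simp: doubleton_eq_iff card_insert_if)
  then obtain x y where xy: "T3 - {z} = {x, y}" "x \<noteq> y" by (auto simp: card_2_iff)
  have "{(e, f). e \<in> T3 \<and> f \<in> T3 \<and> e \<noteq> f \<and> closing_edge e f = z} = {(x, y), (y, x)}"
  proof (intro equalityI subsetI)
    fix p assume p: "p \<in> {(e, f). e \<in> T3 \<and> f \<in> T3 \<and> e \<noteq> f \<and> closing_edge e f = z}"
    obtain e f where ef: "p = (e, f)" by (cases p)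
    have h: "e \<in> T3" "f \<in> T3" "e \<noteq> f" "closing_edge e f = z" using p ef by auto
    hence "e \<in> {x, y}" "f \<in> {x, y}" using T3_wedge(4,5)[OF h(1-3)] xy by blast+
    thus "p \<in> {(x, y), (y, x)}" using ef h by auto
  next
    have xyT: "x \<in> T3" "y \<in> T3" "x \<noteq> z" "y \<noteq> z" using xy by blast+
    have "closing_edge x y \<in> T3" "closing_edge x y \<noteq> x" "closing_edge x y \<noteq> y"
      using T3_wedge(3-5)[OF xyT(1,2) xy(2)] by auto
    hence "closing_edge x y = z" using xy by blast
    hence "closing_edge x y = z" "closing_edge y x = z" by (simp_all add: closing_edge_commute)
    moreover fix p assume "p \<in> {(x, y), (y, x)}"
    ultimately show "p \<in> {(e, f). e \<in> T3 \<and> f \<in> T3 \<and> e \<noteq> f \<and> closing_edge e f = z}"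
      using xyT xy(2) by auto
  qed
  thus ?thesis using xy(2) by simp
qed

lemma closing_edge_eq_last_in_triangle:
  assumes dist: "distinct es" and abc: "a \<noteq> b" "b \<noteq> c" "a \<noteq> c"
  defines "T3 \<equiv> {{b, c}, {a, c}, {a, b}}"
  assumes z: "z \<in> T3" "\<And>y. y \<in> T3 \<Longrightarrow> arrival es y \<le> arrival es z"
    and ef: "e \<in> T3" "f \<in> T3" "e \<noteq> f" "e \<in> set es" "f \<in> set es"
    and closed: "closed_before es (length es) e f"
  shows "closing_edge e f = z"
proof (rule ccontr)
  let ?g = "closing_edge e f"
  assume "?g \<noteq> z"
  have g: "?g \<in> T3" "?g \<noteq> e" "?g \<noteq> f"
    using wedge_within_triangle(3-5)[OF abc, folded T3_def] ef by auto
  have "finite T3" "card T3 = 3" using abc by (simp_all add: T3_def doubleton_eq_iff)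
  hence "T3 = {e, f, ?g}" using ef g by (intro card_3_eqI) auto
  hence "z = e \<or> z = f" using z(1) \<open>?g \<noteq> z\<close> by blast
  moreover have "arrival es e < arrival es ?g" "arrival es f < arrival es ?g"
    using closed_before_length_iff[OF dist ef(4,5)] closed by auto
  moreover have "arrival es ?g \<le> arrival es z" using z(2) g by auto
  ultimately show False by auto
qed

lemma closed_ordered_wedges_on_triangle:
  assumes dist: "distinct es" and edges: "\<forall>e\<in>set es. is_edge e"
    and abc: "a \<noteq> b" "b \<noteq> c" "a \<noteq> c"
  defines "T3 \<equiv> {{b, c}, {a, c}, {a, b}}"
  assumes T3: "T3 \<subseteq> set es"
    and z: "z \<in> T3" "\<And>y. y \<in> T3 \<Longrightarrow> arrival es y \<le> arrival es z"
  shows "{p \<in> closed_ordered_wedges es. fst p \<union> snd p = {a, b, c}} =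
         {(e, f). e \<in> T3 \<and> f \<in> T3 \<and> e \<noteq> f \<and> closing_edge e f = z}"
proof (intro equalityI subsetI)
  fix p assume p: "p \<in> {p \<in> closed_ordered_wedges es. fst p \<union> snd p = {a, b, c}}"
  obtain e f where ef: "p = (e, f)" by (cases p)
  have eE: "e \<in> set es" "f \<in> set es" "is_wedge e f" "closed_before es (length es) e f"
    "e \<union> f = {a, b, c}"
    using p ef by (auto simp: closed_ordered_wedges_def ordered_wedges_def)
  have sub: "e \<subseteq> {a, b, c}" "f \<subseteq> {a, b, c}" using eE(5) by blast+
  have ce: "card e = 2" "card f = 2" using edges eE(1,2) by (auto simp: is_edge_def)
  have "e \<in> T3" unfolding T3_def using sub(1) ce(1) by (rule edge_subset_three)
  moreover have "f \<in> T3" unfolding T3_def using sub(2) ce(2) by (rule edge_subset_three)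
  moreover have "e \<noteq> f" using eE by (auto simp: is_wedge_def)
  moreover have "closing_edge e f = z"
    using closing_edge_eq_last_in_triangle[OF dist abc, folded T3_def, OF z] calculation eE
    by blast
  ultimately show "p \<in> {(e, f). e \<in> T3 \<and> f \<in> T3 \<and> e \<noteq> f \<and> closing_edge e f = z}"
    using ef by auto
next
  note T3_wedge = wedge_within_triangle[OF abc, folded T3_def]
  fix p assume p: "p \<in> {(e, f). e \<in> T3 \<and> f \<in> T3 \<and> e \<noteq> f \<and> closing_edge e f = z}"
  obtain e f where ef: "p = (e, f)" by (cases p)
  have h: "e \<in> T3" "f \<in> T3" "e \<noteq> f" "closing_edge e f = z" using p ef by auto
  hence in_es: "e \<in> set es" "f \<in> set es" "z \<in> set es" using T3 z(1) by auto
  have "e \<noteq> z" "f \<noteq> z" using T3_wedge(4,5)[OF h(1-3)] h(4) by auto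
  hence "arrival es e \<noteq> arrival es z" "arrival es f \<noteq> arrival es z"
    using nth_arrival[OF dist] in_es by metis+
  hence "arrival es e < arrival es z" "arrival es f < arrival es z"
    using z(2) h by (auto simp: le_less)
  hence "closed_before es (length es) e f"
    using closed_before_length_iff[OF dist in_es(1,2)] in_es h by auto
  thus "p \<in> {p \<in> closed_ordered_wedges es. fst p \<union> snd p = {a, b, c}}"
    using ef T3_wedge(1,2)[OF h(1-3)] in_es
    by (auto simp: closed_ordered_wedges_def ordered_wedges_def)
qed

text \<open>Of the three wedges spanned by a triangle, exactly one is closed in the stream: the one
  whose closing edge arrives last. It is counted twice, once per ordering.\<close>
lemma card_closed_ordered_wedges_on_triangle:
  assumes dist: "distinct es" and edges: "\<forall>e\<in>set es. is_edge e"
    and X: "X \<in> triangles (set es)"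
  shows "card {p \<in> closed_ordered_wedges es. fst p \<union> snd p = X} = 2"
proof -
  obtain a b c where abc: "X = {a, b, c}" "a \<noteq> b" "b \<noteq> c" "a \<noteq> c"
    and T3: "{{b, c}, {a, c}, {a, b}} \<subseteq> set es"
    using X by (rule triangleE)
  let ?T3 = "{{b, c}, {a, c}, {a, b}}"
  have fin: "finite (arrival es ` ?T3)" "arrival es ` ?T3 \<noteq> {}" by auto
  obtain z where z_max: "Max (arrival es ` ?T3) = arrival es z" and z: "z \<in> ?T3"
    using Max_in[OF fin] by (rule imageE)
  have z_last: "arrival es y \<le> arrival es z" if "y \<in> ?T3" for y
    using Max_ge[OF fin(1) imageI[OF that]] by (simp only: z_max)
  show ?thesis
    using closed_ordered_wedges_on_triangle[OF dist edges abc(2-4) T3 z z_last]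
      card_wedges_closed_by[OF abc(2-4) z] abc(1) by simp
qed

lemma finite_triangles:
  assumes "finite E" "\<forall>e\<in>E. is_edge e"
  shows "finite (triangles E)"
proof (rule finite_subset[of _ "Pow (\<Union>E)"])
  show "triangles E \<subseteq> Pow (\<Union>E)"
  proof
    fix X assume X: "X \<in> triangles E"
    then obtain a b c where "X = {a, b, c}" "{{b, c}, {a, c}, {a, b}} \<subseteq> E"
      by (rule triangleE)
    thus "X \<in> Pow (\<Union>E)" by blast
  qed
  have "finite e" if "e \<in> E" for e
    using assms that by (auto simp: is_edge_def intro: card_ge_0_finite)
  thus "finite (Pow (\<Union>E))" using assms(1) by simp
qed

lemma card_closed_ordered_wedges:
  assumes dist: "distinct es" and edges: "\<forall>e\<in>set es. is_edge e"
  shows "card (closed_ordered_wedges es) = 2 * num_triangles (set es)"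
proof -
  let ?fiber = "\<lambda>X. {p \<in> closed_ordered_wedges es. fst p \<union> snd p = X}"
  have "closed_ordered_wedges es = (\<Union>X\<in>triangles (set es). ?fiber X)"
  proof (intro equalityI subsetI)
    fix p assume p: "p \<in> closed_ordered_wedges es"
    obtain e f where ef: "p = (e, f)" by (cases p)
    have "closing_edge e f \<in> set es"
      using p ef closed_before_length_iff[OF dist]
      by (auto simp: closed_ordered_wedges_def ordered_wedges_def)
    hence "e \<union> f \<in> triangles (set es)"
      using p ef edges by (intro wedge_union_in_triangles)
        (auto simp: closed_ordered_wedges_def ordered_wedges_def)
    thus "p \<in> (\<Union>X\<in>triangles (set es). ?fiber X)" using p ef by auto
  qed auto
  also have "card \<dots> = (\<Sum>X\<in>triangles (set es). card (?fiber X))"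
  proof (rule card_UN_disjoint)
    have "closed_ordered_wedges es \<subseteq> set es \<times> set es"
      by (auto simp: closed_ordered_wedges_def ordered_wedges_def)
    thus "\<forall>X\<in>triangles (set es). finite (?fiber X)"
      by (auto intro: finite_subset)
  qed (use finite_triangles edges in auto)
  also have "\<dots> = (\<Sum>X\<in>triangles (set es). 2)"
    using card_closed_ordered_wedges_on_triangle[OF dist edges] by simp
  finally show ?thesis by (simp add: num_triangles_eq_card)
qed

lemma num_triangles_le_num_wedges:
  assumes "distinct es" "\<forall>e\<in>set es. is_edge e"
  shows "num_triangles (set es) \<le> num_wedges (set es)"
proof -
  have "card (closed_ordered_wedges es) \<le> card (ordered_wedges (set es))"
    by (intro card_mono finite_ordered_wedges) (auto simp: closed_ordered_wedges_def)
  thus ?thesis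
    using card_closed_ordered_wedges[OF assms] card_ordered_wedges[of "set es"] by simp
qed

lemma sum_card_wedges_at:
  assumes "finite E"
  shows "(\<Sum>e\<in>E. card {f \<in> E. is_wedge e f}) = 2 * num_wedges E"
proof -
  have "ordered_wedges E = Sigma E (\<lambda>e. {f \<in> E. is_wedge e f})"
    by (auto simp: ordered_wedges_def)
  thus ?thesis using card_ordered_wedges[OF assms] assms by (simp add: card_SigmaI)
qed

lemma sum_card_closed_wedges_at:
  assumes "distinct es" "\<forall>e\<in>set es. is_edge e"
  shows "(\<Sum>e\<in>set es. card {f \<in> set es. is_wedge e f \<and> closed_before es (length es) e f})
         = 2 * num_triangles (set es)"
proof -
  have "closed_ordered_wedges es =
        Sigma (set es) (\<lambda>e. {f \<in> set es. is_wedge e f \<and> closed_before es (length es) e f})"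
    by (auto simp: closed_ordered_wedges_def ordered_wedges_def)
  thus ?thesis using card_closed_ordered_wedges[OF assms] by (simp add: card_SigmaI)
qed

lemma is_wedge_if_common_vertex:
  assumes "is_edge f" "is_edge f'" "f \<noteq> f'" "u \<in> f" "u \<in> f'"
  shows "is_wedge f f'"
proof -
  have c: "card f = 2" "card f' = 2" using assms by (auto simp: is_edge_def)
  hence fin: "finite f" "finite f'" by (auto intro: card_ge_0_finite)
  have "card (f \<inter> f') \<noteq> 0" using assms fin by auto
  moreover have "card (f \<inter> f') \<le> 2" using card_mono[OF fin(1), of "f \<inter> f'"] c by auto
  moreover have "card (f \<inter> f') \<noteq> 2"
  proof
    assume "card (f \<inter> f') = 2"
    hence "f \<inter> f' = f" "f \<inter> f' = f'"
      using card_subset_eq[OF fin(1), of "f \<inter> f'"] card_subset_eq[OF fin(2), of "f \<inter> f'"] c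
      by auto
    thus False using assms(3) by simp
  qed
  ultimately show ?thesis using assms(3) by (simp add: is_wedge_def)
qed

lemma card_edges_at_choose_two_le:
  assumes "finite E" "\<forall>e\<in>E. is_edge e"
  shows "card {f \<in> E. u \<in> f} choose 2 \<le> num_wedges E"
proof -
  let ?A = "{f \<in> E. u \<in> f}"
  have "{B. B \<subseteq> ?A \<and> card B = 2} \<subseteq> wedges E"
  proof
    fix B assume "B \<in> {B. B \<subseteq> ?A \<and> card B = 2}"
    then obtain f f' where B: "B = {f, f'}" "f \<noteq> f'" "f \<in> ?A" "f' \<in> ?A"
      by (auto simp: card_2_iff)
    hence "is_wedge f f'" using assms(2) by (intro is_wedge_if_common_vertex) auto
    thus "B \<in> wedges E" using B unfolding wedges_def by blast
  qed
  moreover have "finite (wedges E)" using assms(1) by (rule finite_wedges)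
  ultimately have "card {B. B \<subseteq> ?A \<and> card B = 2} \<le> num_wedges E"
    by (simp add: card_mono num_wedges_eq_card)
  thus ?thesis using assms(1) by (simp add: n_subsets)
qed

lemma card_edges_at_sq_le:
  assumes "finite E" "\<forall>e\<in>E. is_edge e" "num_wedges E \<ge> 1"
  shows "(real (card {f \<in> E. u \<in> f}))\<^sup>2 \<le> 6 * num_wedges E"
proof -
  define a where "a = card {f \<in> E. u \<in> f}"
  have h: "a * (a - 1) div 2 \<le> num_wedges E"
    using card_edges_at_choose_two_le[OF assms(1,2), of u] by (simp add: a_def choose_two)
  show ?thesis
  proof (cases "a \<le> 1")
    case True
    hence "real a ^ 2 \<le> 1" by (cases a) auto
    thus ?thesis using assms(3) unfolding a_def by simp
  next
    case False
    have "real (a * (a - 1)) \<le> real (2 * num_wedges E + 1)" using h by linarith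
    hence "real a * real a - real a \<le> 2 * num_wedges E + 1"
      using False by (simp add: of_nat_diff algebra_simps)
    moreover have "0 \<le> real a * (real a - 2)" using False by simp
    ultimately show ?thesis using assms(3) unfolding a_def
      by (simp add: power2_eq_square algebra_simps)
  qed
qed

lemma card_wedges_at_le:
  assumes fin: "finite E" and edges: "\<forall>e\<in>E. is_edge e" and "e \<in> E"
    and W: "num_wedges E \<ge> 1"
  shows "real (card {f \<in> E. is_wedge e f}) \<le> 5 * sqrt (num_wedges E)"
proof -
  obtain u v where e: "e = {u, v}" using assms by (auto simp: is_edge_def card_2_iff)
  let ?W = "real (num_wedges E)"
  have "{f \<in> E. is_wedge e f} \<subseteq> {f \<in> E. u \<in> f} \<union> {f \<in> E. v \<in> f}"
  proof
    fix f assume "f \<in> {f \<in> E. is_wedge e f}"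
    hence "f \<in> E" "e \<inter> f \<noteq> {}" by (auto simp: is_wedge_def)
    thus "f \<in> {f \<in> E. u \<in> f} \<union> {f \<in> E. v \<in> f}" using e by auto
  qed
  hence "card {f \<in> E. is_wedge e f} \<le> card ({f \<in> E. u \<in> f} \<union> {f \<in> E. v \<in> f})"
    using fin by (intro card_mono) auto
  also have "\<dots> \<le> card {f \<in> E. u \<in> f} + card {f \<in> E. v \<in> f}" by (rule card_Un_le)
  finally have "real (card {f \<in> E. is_wedge e f})
      \<le> real (card {f \<in> E. u \<in> f}) + real (card {f \<in> E. v \<in> f})"
    by linarith
  also have "\<dots> \<le> sqrt (6 * ?W) + sqrt (6 * ?W)"
    using card_edges_at_sq_le[OF fin edges W, of u] card_edges_at_sq_le[OF fin edges W, of v]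
    by (intro add_mono real_le_rsqrt) auto
  also have "\<dots> = 2 * sqrt 6 * sqrt ?W" by (simp add: real_sqrt_mult)
  also have "\<dots> \<le> 2 * (5 / 2) * sqrt ?W"
  proof -
    have "sqrt 6 \<le> 5 / 2" by (rule real_le_lsqrt) (auto simp: power2_eq_square)
    thus ?thesis by (intro mult_right_mono) auto
  qed
  finally show ?thesis by simp
qed

section \<open>Concentration of the slot wedge counts\<close>

lemma kernel_mean_pmf_of_set:
  assumes "finite E" "E \<noteq> {}"
  shows "kernel_mean (pmf_of_set E) g = (\<Sum>a\<in>E. \<Sum>b\<in>E. g a b) / (card E)\<^sup>2"
  using assms by (simp add: kernel_mean_def integral_pmf_of_set sum_divide_distrib power2_eq_square)

lemma kernel_degree_moment_pmf_of_set:
  assumes "finite E" "E \<noteq> {}"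
  shows "kernel_degree_moment (pmf_of_set E) g = (\<Sum>a\<in>E. ((\<Sum>b\<in>E. g a b) / card E)\<^sup>2) / card E"
  using assms by (simp add: kernel_degree_moment_def integral_pmf_of_set)

lemma kernel_degree_moment_mono:
  assumes "finite (set_pmf u)" "\<And>a b. 0 \<le> g a b" "\<And>a b. g a b \<le> h a b"
  shows "kernel_degree_moment u g \<le> kernel_degree_moment u h"
  unfolding kernel_degree_moment_def using assms
  by (intro integral_mono power_mono Bochner_Integration.integral_nonneg
        integrable_measure_pmf_finite) auto

definition wedge_kernel :: "edge \<Rightarrow> edge \<Rightarrow> real" where
  "wedge_kernel e f = of_bool (is_wedge e f)"

definition closed_wedge_kernel :: "edge list \<Rightarrow> edge \<Rightarrow> edge \<Rightarrow> real" where
  "closed_wedge_kernel es e f = of_bool (is_wedge e f \<and> closed_before es (length es) e f)"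

lemma bounded_symmetric_wedge_kernel:
  "finite E \<Longrightarrow> E \<noteq> {} \<Longrightarrow> bounded_symmetric_kernel (pmf_of_set E) wedge_kernel"
  by unfold_locales (auto simp: wedge_kernel_def is_wedge_commute)

lemma bounded_symmetric_closed_wedge_kernel:
  "finite E \<Longrightarrow> E \<noteq> {} \<Longrightarrow> bounded_symmetric_kernel (pmf_of_set E) (closed_wedge_kernel es)"
  by unfold_locales (auto simp: closed_wedge_kernel_def is_wedge_commute closed_before_commute)

lemma pair_count_wedge_kernel: "pair_count s wedge_kernel R = card (wedge_pairs s R)"
proof -
  have "{p \<in> slot_pairs s. is_wedge (R (fst p)) (R (snd p))} = wedge_pairs s R"
    by (auto simp: slot_pairs_def wedge_pairs_def)
  thus ?thesis by (simp add: pair_count_def wedge_kernel_def finite_slot_pairs Int_def)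
qed

lemma pair_count_closed_wedge_kernel:
  "pair_count s (closed_wedge_kernel es) R = card (closed_pairs s es (length es) R)"
proof -
  have "{p \<in> slot_pairs s. is_wedge (R (fst p)) (R (snd p)) \<and>
          closed_before es (length es) (R (fst p)) (R (snd p))} = closed_pairs s es (length es) R"
    by (auto simp: slot_pairs_def wedge_pairs_def closed_pairs_def)
  thus ?thesis by (simp add: pair_count_def closed_wedge_kernel_def finite_slot_pairs Int_def)
qed

lemma kernel_mean_wedge_kernel:
  assumes "finite E" "E \<noteq> {}"
  shows "kernel_mean (pmf_of_set E) wedge_kernel = 2 * num_wedges E / (card E)\<^sup>2"
proof -
  have "(\<Sum>a\<in>E. \<Sum>b\<in>E. wedge_kernel a b) = real (\<Sum>a\<in>E. card {b \<in> E. is_wedge a b})"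
    using assms by (simp add: wedge_kernel_def Int_def)
  thus ?thesis using assms by (simp add: kernel_mean_pmf_of_set sum_card_wedges_at)
qed

lemma kernel_mean_closed_wedge_kernel:
  assumes "distinct es" "\<forall>e\<in>set es. is_edge e" "es \<noteq> []"
  shows "kernel_mean (pmf_of_set (set es)) (closed_wedge_kernel es) =
         2 * num_triangles (set es) / (length es)\<^sup>2"
proof -
  have "(\<Sum>a\<in>set es. \<Sum>b\<in>set es. closed_wedge_kernel es a b) =
        real (\<Sum>a\<in>set es. card {b \<in> set es. is_wedge a b \<and> closed_before es (length es) a b})"
    by (simp add: closed_wedge_kernel_def Int_def)
  thus ?thesis
    using assms by (simp add: kernel_mean_pmf_of_set sum_card_closed_wedges_at distinct_card)
qed

lemma kernel_degree_moment_wedge_kernel_le: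
  assumes fin: "finite E" and edges: "\<forall>e\<in>E. is_edge e" and W: "num_wedges E \<ge> 1"
  shows "kernel_degree_moment (pmf_of_set E) wedge_kernel \<le>
         10 * sqrt (num_wedges E) ^ 3 / (card E) ^ 3"
proof -
  let ?w = "sqrt (num_wedges E)" and ?m = "real (card E)" and ?d = "\<lambda>a. real (card {b \<in> E. is_wedge a b})"
  have E: "E \<noteq> {}" using W by (auto simp: num_wedges_def)
  have deg: "(\<Sum>b\<in>E. wedge_kernel a b) = ?d a" for a
    using fin by (simp add: wedge_kernel_def Int_def)
  have "(\<Sum>a\<in>E. (?d a / ?m)\<^sup>2) \<le> (\<Sum>a\<in>E. 5 * ?w * ?d a / ?m\<^sup>2)"
  proof (intro sum_mono)
    fix a assume "a \<in> E"
    hence "?d a * ?d a \<le> 5 * ?w * ?d a"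
      using card_wedges_at_le[OF fin edges _ W] by (intro mult_right_mono) auto
    thus "(?d a / ?m)\<^sup>2 \<le> 5 * ?w * ?d a / ?m\<^sup>2"
      by (simp add: power_divide power2_eq_square divide_right_mono)
  qed
  also have "\<dots> = 5 * ?w * (\<Sum>a\<in>E. ?d a) / ?m\<^sup>2"
    by (simp add: sum_divide_distrib sum_distrib_left)
  also have "(\<Sum>a\<in>E. ?d a) = 2 * ?w\<^sup>2"
    using sum_card_wedges_at[OF fin] by (simp flip: of_nat_sum)
  finally have "(\<Sum>a\<in>E. (?d a / ?m)\<^sup>2) \<le> 10 * ?w ^ 3 / ?m\<^sup>2"
    by (simp add: power2_eq_square power3_eq_cube mult.commute)
  hence "(\<Sum>a\<in>E. (?d a / ?m)\<^sup>2) / ?m \<le> 10 * ?w ^ 3 / ?m\<^sup>2 / ?m"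
    by (intro divide_right_mono) auto
  thus ?thesis using fin E
    by (simp add: kernel_degree_moment_pmf_of_set deg power2_eq_square power3_eq_cube)
qed

lemma reservoir_pmf_length:
  "reservoir_pmf s es (length es) = Pi_pmf {..<s} {} (\<lambda>_. pmf_of_set (set es))"
  by (simp add: reservoir_pmf_def)

lemma prob_wedge_count_deviation:
  assumes dist: "distinct es" and edges: "\<forall>e\<in>set es. is_edge e"
    and W1: "num_wedges (set es) \<ge> 1" and "a > 0"
  defines "m \<equiv> real (length es)" and "W \<equiv> real (num_wedges (set es))"
  shows "measure_pmf.prob (reservoir_pmf s es (length es))
           {R. a \<le> \<bar>card (wedge_pairs s R) - real s * (real s - 1) * W / m\<^sup>2\<bar>}
         \<le> (real s * (real s - 1) * W / m\<^sup>2 + 40 * real s ^ 3 * sqrt W ^ 3 / m ^ 3) / a\<^sup>2"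
proof -
  have E: "finite (set es)" "set es \<noteq> {}" using W1 by (auto simp: num_wedges_def)
  interpret bounded_symmetric_kernel "pmf_of_set (set es)" wedge_kernel
    using bounded_symmetric_wedge_kernel[OF E] .
  have card_E: "real (card (set es)) = m" using dist by (simp add: m_def distinct_card)
  have mean: "card (slot_pairs s) * kernel_mean (pmf_of_set (set es)) wedge_kernel
              = real s * (real s - 1) * W / m\<^sup>2"
    by (simp add: real_card_slot_pairs kernel_mean_wedge_kernel[OF E] card_E W_def)
  have "4 * real s ^ 3 * kernel_degree_moment (pmf_of_set (set es)) wedge_kernel
        \<le> 4 * real s ^ 3 * (10 * sqrt W ^ 3 / m ^ 3)"
    using kernel_degree_moment_wedge_kernel_le[OF E(1) edges W1]
    by (intro mult_left_mono) (simp_all add: card_E W_def)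
  hence "(card (slot_pairs s) * kernel_mean (pmf_of_set (set es)) wedge_kernel
          + 4 * real s ^ 3 * kernel_degree_moment (pmf_of_set (set es)) wedge_kernel) / a\<^sup>2
         \<le> (real s * (real s - 1) * W / m\<^sup>2 + 40 * real s ^ 3 * sqrt W ^ 3 / m ^ 3) / a\<^sup>2"
    unfolding mean by (intro divide_right_mono) auto
  with prob_pair_count_deviation[OF \<open>a > 0\<close>, of s "{}"] show ?thesis
    by (simp add: reservoir_pmf_length pair_count_wedge_kernel mean)
qed

lemma prob_closed_wedge_count_deviation:
  assumes dist: "distinct es" and edges: "\<forall>e\<in>set es. is_edge e"
    and W1: "num_wedges (set es) \<ge> 1" and "a > 0"
  defines "m \<equiv> real (length es)" and "W \<equiv> real (num_wedges (set es))"
    and "T \<equiv> real (num_triangles (set es))"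
  shows "measure_pmf.prob (reservoir_pmf s es (length es))
           {R. a \<le> \<bar>card (closed_pairs s es (length es) R) - real s * (real s - 1) * T / m\<^sup>2\<bar>}
         \<le> (real s * (real s - 1) * T / m\<^sup>2 + 40 * real s ^ 3 * sqrt W ^ 3 / m ^ 3) / a\<^sup>2"
proof -
  have E: "finite (set es)" "set es \<noteq> {}" using W1 by (auto simp: num_wedges_def)
  interpret bounded_symmetric_kernel "pmf_of_set (set es)" "closed_wedge_kernel es"
    using bounded_symmetric_closed_wedge_kernel[OF E] .
  have card_E: "real (card (set es)) = m" using dist by (simp add: m_def distinct_card)
  have mean: "card (slot_pairs s) * kernel_mean (pmf_of_set (set es)) (closed_wedge_kernel es)
              = real s * (real s - 1) * T / m\<^sup>2"
    using E by (simp add: real_card_slot_pairs kernel_mean_closed_wedge_kernel[OF dist edges]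
        T_def m_def)
  have "kernel_degree_moment (pmf_of_set (set es)) (closed_wedge_kernel es)
        \<le> kernel_degree_moment (pmf_of_set (set es)) wedge_kernel"
    using E by (intro kernel_degree_moment_mono)
      (auto simp: closed_wedge_kernel_def wedge_kernel_def)
  also have "\<dots> \<le> 10 * sqrt W ^ 3 / m ^ 3"
    using kernel_degree_moment_wedge_kernel_le[OF E(1) edges W1] by (simp add: card_E W_def)
  finally have "4 * real s ^ 3 * kernel_degree_moment (pmf_of_set (set es)) (closed_wedge_kernel es)
      \<le> 4 * real s ^ 3 * (10 * sqrt W ^ 3 / m ^ 3)"
    by (intro mult_left_mono) auto
  hence "(card (slot_pairs s) * kernel_mean (pmf_of_set (set es)) (closed_wedge_kernel es)
        + 4 * real s ^ 3 * kernel_degree_moment (pmf_of_set (set es)) (closed_wedge_kernel es)) / a\<^sup>2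
      \<le> (real s * (real s - 1) * T / m\<^sup>2 + 40 * real s ^ 3 * sqrt W ^ 3 / m ^ 3) / a\<^sup>2"
    unfolding mean by (intro divide_right_mono) auto
  with prob_pair_count_deviation[OF \<open>a > 0\<close>, of s "{}"] show ?thesis
    by (simp add: reservoir_pmf_length pair_count_closed_wedge_kernel mean)
qed

lemma reservoir_size_bounds:
  fixes S M T W c \<beta> :: real
  assumes c: "c > 0" and M: "M > 0" and \<beta>: "0 < \<beta>" "\<beta> \<le> 1"
    and T: "0 < T" "T \<le> W" "W \<le> M\<^sup>2" and S: "S \<ge> c * M / (\<beta> ^ 3 * sqrt T)"
  shows "S \<ge> c" "M / (S * sqrt W) \<le> \<beta> ^ 3 / c"
proof -
  have \<beta>3: "0 < \<beta> ^ 3" "\<beta> ^ 3 \<le> 1" using \<beta> by (auto simp: power_le_one)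
  have sqrt_T: "0 < sqrt T" "sqrt T \<le> sqrt W" "sqrt W \<le> M"
    using T M real_sqrt_le_mono[OF T(2)] real_sqrt_le_mono[OF T(3)] by auto
  have "\<beta> ^ 3 * sqrt T \<le> M" using \<beta>3 sqrt_T by (smt (verit) mult_left_le_one_le)
  hence "c \<le> c * M / (\<beta> ^ 3 * sqrt T)" using c \<beta>3 sqrt_T by (simp add: le_divide_eq)
  thus "S \<ge> c" using S by linarith
  have "c * M \<le> S * (\<beta> ^ 3 * sqrt T)" using S \<beta>3 sqrt_T by (simp add: divide_le_eq)
  also have "\<dots> \<le> S * (\<beta> ^ 3 * sqrt W)"
    using sqrt_T \<beta>3 \<open>S \<ge> c\<close> c by (intro mult_left_mono) auto
  finally have "c * M \<le> \<beta> ^ 3 * (S * sqrt W)" by (simp add: mult_ac)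
  moreover have "0 < S * sqrt W" using \<open>S \<ge> c\<close> c sqrt_T by (intro mult_pos_pos) auto
  ultimately show "M / (S * sqrt W) \<le> \<beta> ^ 3 / c"
    using c by (simp add: divide_le_eq le_divide_eq mult_ac)
qed

lemma mean_plus_cubic_le:
  fixes S M w :: real
  assumes S: "S \<ge> 2" and M: "M > 0" and w: "w > 0"
  defines "r \<equiv> M / (S * w)" and "\<mu> \<equiv> S * (S - 1) * w\<^sup>2 / M\<^sup>2"
  shows "\<mu> + 40 * S ^ 3 * w ^ 3 / M ^ 3 \<le> (2 * r\<^sup>2 + 160 * r) * \<mu>\<^sup>2"
proof -
  have S': "S \<le> 2 * (S - 1)" using S by simp
  hence "S * (S - 1) \<le> (2 * (S - 1)) * (S - 1)" using S by (intro mult_right_mono) auto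
  hence a1: "S * (S - 1) \<le> 2 * (S - 1)\<^sup>2" by (simp add: power2_eq_square algebra_simps)
  have "S\<^sup>2 \<le> (2 * (S - 1))\<^sup>2" using S S' by (intro power_mono) auto
  hence "S * S\<^sup>2 \<le> S * (4 * (S - 1)\<^sup>2)" using S by (intro mult_left_mono) (auto simp: power2_eq_square algebra_simps)
  hence a2: "40 * S ^ 3 \<le> 160 * S * (S - 1)\<^sup>2" by (simp add: power3_eq_cube power2_eq_square algebra_simps)
  have "\<mu> = (S * (S - 1)) * (w\<^sup>2 / M\<^sup>2)" by (simp add: \<mu>_def)
  also have "\<dots> \<le> (2 * (S - 1)\<^sup>2) * (w\<^sup>2 / M\<^sup>2)" using a1 by (intro mult_right_mono) auto
  also have "\<dots> = 2 * r\<^sup>2 * \<mu>\<^sup>2"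
    using S M w by (simp add: r_def \<mu>_def field_simps power2_eq_square)
  finally have b1: "\<mu> \<le> 2 * r\<^sup>2 * \<mu>\<^sup>2" .
  have "40 * S ^ 3 * w ^ 3 / M ^ 3 = (40 * S ^ 3) * (w ^ 3 / M ^ 3)" by simp
  also have "\<dots> \<le> (160 * S * (S - 1)\<^sup>2) * (w ^ 3 / M ^ 3)"
    using a2 M w by (intro mult_right_mono) auto
  also have "\<dots> = 160 * r * \<mu>\<^sup>2"
    using S M w by (simp add: r_def \<mu>_def field_simps power2_eq_square power3_eq_cube)
  finally show ?thesis using b1 by (simp add: distrib_right)
qed

lemma pair_count_variance_le_mean_sq:
  fixes S M T W c \<beta> :: real
  assumes c: "c \<ge> 2" and M: "M > 0" and \<beta>: "0 < \<beta>" "\<beta> \<le> 1"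
    and T: "1 \<le> T" "T \<le> W" "W \<le> M\<^sup>2" and S: "S \<ge> c * M / (\<beta> ^ 3 * sqrt T)"
  defines "\<mu> \<equiv> S * (S - 1) * W / M\<^sup>2"
  shows "S \<ge> 2" "\<mu> + 40 * S ^ 3 * sqrt W ^ 3 / M ^ 3 \<le> 162 * (\<beta> ^ 3 / c) * \<mu>\<^sup>2"
proof -
  define r where "r = M / (S * sqrt W)"
  have "S \<ge> c" and r: "r \<le> \<beta> ^ 3 / c"
    using reservoir_size_bounds[OF _ M \<beta> _ T(2,3) S] c T by (auto simp: r_def)
  thus "S \<ge> 2" using c by simp
  have w: "sqrt W > 0" "W = (sqrt W)\<^sup>2" using T by auto
  have "\<beta> ^ 3 \<le> 1" using \<beta> by (simp add: power_le_one)
  hence "r \<le> 1" using r c by (smt (verit) divide_le_eq_1)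
  moreover have "0 \<le> r" using M \<open>S \<ge> 2\<close> w by (simp add: r_def)
  ultimately have "r\<^sup>2 \<le> r" by (simp add: power2_eq_square mult_left_le_one_le)
  hence "2 * r\<^sup>2 + 160 * r \<le> 162 * (\<beta> ^ 3 / c)" using r by linarith
  hence "(2 * r\<^sup>2 + 160 * r) * \<mu>\<^sup>2 \<le> 162 * (\<beta> ^ 3 / c) * \<mu>\<^sup>2"
    by (intro mult_right_mono) auto
  with mean_plus_cubic_le[OF \<open>S \<ge> 2\<close> M w(1)]
  show "\<mu> + 40 * S ^ 3 * sqrt W ^ 3 / M ^ 3 \<le> 162 * (\<beta> ^ 3 / c) * \<mu>\<^sup>2"
    unfolding \<mu>_def r_def using w(2) by simp
qed

lemma ratio_deviation_le:
  fixes X Y \<mu> \<nu> \<delta> :: real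
  assumes "0 < \<mu>" "0 \<le> \<nu>" "\<nu> \<le> \<mu>" "0 < \<delta>" "\<delta> \<le> 1/4"
    "\<bar>X - \<mu>\<bar> < \<delta> * \<mu>" "\<bar>Y - \<nu>\<bar> < \<delta> * \<mu>"
  shows "\<bar>Y / X - \<nu> / \<mu>\<bar> \<le> 8/3 * \<delta>"
proof -
  have "\<delta> * \<mu> \<le> 1/4 * \<mu>" using assms by (intro mult_right_mono) auto
  hence X: "X \<ge> 3/4 * \<mu>" using assms(6) unfolding abs_less_iff by linarith
  hence X0: "X > 0" using assms by simp
  have "\<bar>\<nu> * (X - \<mu>)\<bar> \<le> \<mu> * (\<delta> * \<mu>)"
    using assms by (simp add: abs_mult) (intro mult_mono, auto)
  moreover have "\<bar>(Y - \<nu>) * \<mu>\<bar> \<le> \<delta> * \<mu> * \<mu>"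
    using assms by (simp add: abs_mult mult_right_mono)
  ultimately have num: "\<bar>(Y - \<nu>) * \<mu> - \<nu> * (X - \<mu>)\<bar> \<le> 2 * \<delta> * \<mu> * \<mu>"
    using abs_triangle_ineq4[of "(Y - \<nu>) * \<mu>" "\<nu> * (X - \<mu>)"] by (simp add: mult_ac)
  have "\<bar>Y / X - \<nu> / \<mu>\<bar> = \<bar>(Y - \<nu>) * \<mu> - \<nu> * (X - \<mu>)\<bar> / (X * \<mu>)"
    using X0 assms(1) by (simp add: field_simps abs_divide abs_mult)
  also have "\<dots> \<le> 2 * \<delta> * \<mu> * \<mu> / (X * \<mu>)"
    using X0 assms(1) num by (intro divide_right_mono) auto
  also have "\<dots> = 2 * \<delta> * \<mu> / X" using assms(1) by (simp add: field_simps)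
  also have "\<dots> \<le> 2 * \<delta> * \<mu> / (3/4 * \<mu>)"
    using X assms X0 by (intro divide_left_mono) auto
  also have "\<dots> = 8/3 * \<delta>" using assms(1) by (simp add: field_simps)
  finally show ?thesis .
qed

text \<open>Outside the two deviation events the ratio is close to \<open>\<nu> / \<mu>\<close>; inside them it still
  lies in \<open>[0, 1]\<close>, also when \<open>X = 0\<close> (where \<open>Y / X = 0\<close>).\<close>
lemma expectation_ratio_deviation_le:
  fixes Q :: "'a pmf" and X Y :: "'a \<Rightarrow> real"
  assumes fin: "finite (set_pmf Q)"
    and Y: "\<And>R. 0 \<le> Y R" "\<And>R. Y R \<le> X R"
    and \<mu>: "0 < \<mu>" "0 \<le> \<nu>" "\<nu> \<le> \<mu>" and \<delta>: "0 < \<delta>" "\<delta> \<le> 1/4"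
    and p1: "measure_pmf.prob Q {R. \<delta> * \<mu> \<le> \<bar>X R - \<mu>\<bar>} \<le> q1"
    and p2: "measure_pmf.prob Q {R. \<delta> * \<mu> \<le> \<bar>Y R - \<nu>\<bar>} \<le> q2"
  shows "\<bar>\<nu> / \<mu> - measure_pmf.expectation Q (\<lambda>R. Y R / X R)\<bar> \<le> 8/3 * \<delta> + q1 + q2"
proof -
  let ?B1 = "{R. \<delta> * \<mu> \<le> \<bar>X R - \<mu>\<bar>}" and ?B2 = "{R. \<delta> * \<mu> \<le> \<bar>Y R - \<nu>\<bar>}"
  have int: "integrable (measure_pmf Q) f" for f :: "'a \<Rightarrow> real"
    by (rule integrable_measure_pmf_finite[OF fin])
  have pointwise: "\<bar>Y R / X R - \<nu> / \<mu>\<bar> \<le> 8/3 * \<delta> + indicator ?B1 R + indicator ?B2 R" for R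
  proof (cases "R \<in> ?B1 \<or> R \<in> ?B2")
    case True
    have "0 \<le> Y R / X R" "Y R / X R \<le> 1" "0 \<le> \<nu> / \<mu>" "\<nu> / \<mu> \<le> 1"
      using Y[of R] \<mu> by (auto simp: divide_le_eq_1 le_less)
    moreover have "(1::real) \<le> indicator ?B1 R + indicator ?B2 R"
      using True by (auto simp: indicator_def)
    ultimately show ?thesis using \<delta> by linarith
  next
    case False
    thus ?thesis using ratio_deviation_le[OF \<mu> \<delta>] by (simp add: indicator_def not_le)
  qed
  have "\<bar>\<nu> / \<mu> - measure_pmf.expectation Q (\<lambda>R. Y R / X R)\<bar>
      = \<bar>measure_pmf.expectation Q (\<lambda>R. Y R / X R - \<nu> / \<mu>)\<bar>"
    by (simp add: Bochner_Integration.integral_diff[OF int int] measure_pmf.prob_space)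
  also have "\<dots> \<le> measure_pmf.expectation Q (\<lambda>R. \<bar>Y R / X R - \<nu> / \<mu>\<bar>)"
    by (rule integral_abs_bound)
  also have "\<dots> \<le> measure_pmf.expectation Q (\<lambda>R. 8/3 * \<delta> + indicator ?B1 R + indicator ?B2 R)"
    by (intro integral_mono int pointwise)
  also have "\<dots> = 8/3 * \<delta> + measure_pmf.prob Q ?B1 + measure_pmf.prob Q ?B2"
    by (simp add: Bochner_Integration.integral_add[OF int int] measure_pmf.prob_space)
  finally show ?thesis using p1 p2 by simp
qed

section \<open>The guarantees of Single-Bit\<close>

lemma prob_sb_est_accurate:
  assumes dist: "distinct es" and edges: "\<forall>e\<in>set es. is_edge e" and "es \<noteq> []" and "s \<ge> 2"
  defines "m \<equiv> length es" and "W \<equiv> real (num_wedges (set es))"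
  defines "\<mu> \<equiv> real s * (real s - 1) * W / (real m)\<^sup>2"
  shows "measure_pmf.prob (sb_state s es m) {st. \<bar>W - sb_est s m st\<bar> < \<beta> * W} =
         1 - measure_pmf.prob (reservoir_pmf s es m) {R. \<beta> * \<mu> \<le> \<bar>real (card (wedge_pairs s R)) - \<mu>\<bar>}"
proof -
  define k where "k = real m ^ 2 / (real s * (real s - 1))"
  have k: "k > 0" "\<mu> * k = W" "sb_est s m st = k * card (wedge_pairs s (fst st))" for st
    using assms by (auto simp: k_def \<mu>_def sb_est_def field_simps)
  have "(\<lambda>R. (R, closed_pairs s es m R)) -` {st. \<bar>W - sb_est s m st\<bar> < \<beta> * W} =
        - {R. \<beta> * \<mu> \<le> \<bar>real (card (wedge_pairs s R)) - \<mu>\<bar>}"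
  proof (intro set_eqI)
    fix R
    have "W - sb_est s m (R, C) = k * (\<mu> - card (wedge_pairs s R))" for C
      by (simp flip: k(2) add: k(3) algebra_simps)
    hence dev: "\<bar>W - sb_est s m (R, C)\<bar> = k * \<bar>real (card (wedge_pairs s R)) - \<mu>\<bar>" for C
      using k(1) by (simp add: abs_mult abs_minus_commute)
    have tol: "\<beta> * W = k * (\<beta> * \<mu>)" using k(2) by (simp add: mult_ac)
    have "\<bar>W - sb_est s m (R, closed_pairs s es m R)\<bar> < \<beta> * W \<longleftrightarrow>
          k * \<bar>real (card (wedge_pairs s R)) - \<mu>\<bar> < k * (\<beta> * \<mu>)"
      by (simp only: dev tol)
    also have "\<dots> \<longleftrightarrow> \<bar>real (card (wedge_pairs s R)) - \<mu>\<bar> < \<beta> * \<mu>" using k(1) by simp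
    finally show "R \<in> (\<lambda>R. (R, closed_pairs s es m R)) -` {st. \<bar>W - sb_est s m st\<bar> < \<beta> * W}
        \<longleftrightarrow> R \<in> - {R. \<beta> * \<mu> \<le> \<bar>real (card (wedge_pairs s R)) - \<mu>\<bar>}"
      by (simp add: not_le)
  qed
  moreover have "sb_state s es m = map_pmf (\<lambda>R. (R, closed_pairs s es m R)) (reservoir_pmf s es m)"
    using assms by (intro sb_state_eq_reservoir) (auto simp: Suc_le_eq)
  ultimately show ?thesis
    using measure_pmf.prob_compl[of "{R. \<beta> * \<mu> \<le> \<bar>real (card (wedge_pairs s R)) - \<mu>\<bar>}"
        "reservoir_pmf s es m"]
    by (simp add: Compl_eq_Diff_UNIV)
qed

text \<open>sb_output returns False when there is no wedge, which matches
  \<open>0 / 0 = 0\<close> on the right.\<close>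
lemma prob_sb_final_bit:
  assumes dist: "distinct es" and edges: "\<forall>e\<in>set es. is_edge e" and "es \<noteq> []"
  shows "measure_pmf.prob (sb_final_bit s es) {True} =
    measure_pmf.expectation (reservoir_pmf s es (length es))
      (\<lambda>R. card (closed_pairs s es (length es) R) / card (wedge_pairs s R))"
proof -
  let ?m = "length es"
  have prob_output: "measure_pmf.prob (sb_output s (R, closed_pairs s es ?m R)) {True} =
      card (closed_pairs s es ?m R) / card (wedge_pairs s R)" for R
  proof -
    have "finite (wedge_pairs s R)"
      by (rule finite_subset[of _ "{..<s} \<times> {..<s}"]) (auto simp: wedge_pairs_def)
    moreover have "closed_pairs s es ?m R \<subseteq> wedge_pairs s R" by (auto simp: closed_pairs_def)
    ultimately show ?thesis
      by (cases "wedge_pairs s R = {}") (auto simp: sb_output_def measure_pmf_of_set Int_absorb1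
          vimage_def Int_def [symmetric])
  qed
  have "sb_final_bit s es = reservoir_pmf s es ?m \<bind> (\<lambda>R. sb_output s (R, closed_pairs s es ?m R))"
    unfolding sb_final_bit_def using assms
    by (subst sb_state_eq_reservoir) (auto simp: Suc_le_eq bind_map_pmf)
  moreover have "finite (set_pmf (reservoir_pmf s es ?m))"
    unfolding reservoir_pmf_def using \<open>es \<noteq> []\<close> by (intro finite_set_Pi_pmf) auto
  ultimately show ?thesis by (simp add: prob_bind_pmf_finite prob_output)
qed

lemma num_wedges_bounds:
  assumes "distinct es" "\<forall>e\<in>set es. is_edge e" "num_triangles (set es) \<ge> 1"
  shows "num_triangles (set es) \<le> num_wedges (set es)" "1 \<le> num_wedges (set es)"
    "real (num_wedges (set es)) \<le> (real (length es))\<^sup>2"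
proof -
  show "num_triangles (set es) \<le> num_wedges (set es)"
    using num_triangles_le_num_wedges[OF assms(1,2)] .
  thus "1 \<le> num_wedges (set es)" using assms(3) by simp
  have "2 * num_wedges (set es) \<le> (length es)\<^sup>2"
    using num_wedges_le[of "set es"] assms(1) by (simp add: distinct_card)
  thus "real (num_wedges (set es)) \<le> (real (length es))\<^sup>2"
    by (simp flip: of_nat_power)
qed

lemma reservoir_counts_concentrate:
  fixes es :: "edge list" and \<beta> c \<delta> :: real and s :: nat
  assumes dist: "distinct es" and edges: "\<forall>e\<in>set es. is_edge e"
    and T1: "num_triangles (set es) \<ge> 1" and \<beta>: "0 < \<beta>" "\<beta> \<le> 1" and c: "c \<ge> 2"
    and s: "real s \<ge> c * real (length es) / (\<beta> ^ 3 * sqrt (real (num_triangles (set es))))"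
  defines "m \<equiv> length es" and "W \<equiv> real (num_wedges (set es))"
    and "T \<equiv> real (num_triangles (set es))"
  defines "\<mu> \<equiv> real s * (real s - 1) * W / (real m)\<^sup>2"
    and "\<nu> \<equiv> real s * (real s - 1) * T / (real m)\<^sup>2"
  shows "2 \<le> s"
    and "\<delta> > 0 \<Longrightarrow> measure_pmf.prob (reservoir_pmf s es m)
           {R. \<delta> * \<mu> \<le> \<bar>real (card (wedge_pairs s R)) - \<mu>\<bar>} \<le> 162 * \<beta> ^ 3 / (c * \<delta>\<^sup>2)"
    and "\<delta> > 0 \<Longrightarrow> measure_pmf.prob (reservoir_pmf s es m)
           {R. \<delta> * \<mu> \<le> \<bar>real (card (closed_pairs s es m R)) - \<nu>\<bar>} \<le> 162 * \<beta> ^ 3 / (c * \<delta>\<^sup>2)"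
proof -
  note W = num_wedges_bounds[OF dist edges T1]
  have TW: "1 \<le> T" "T \<le> W" using T1 W(1) by (simp_all add: T_def W_def)
  have m: "real m > 0" using W(2) by (auto simp: m_def num_wedges_def)
  have "real s \<ge> 2" and var: "\<mu> + 40 * real s ^ 3 * sqrt W ^ 3 / real m ^ 3 \<le> 162 * (\<beta> ^ 3 / c) * \<mu>\<^sup>2"
    using pair_count_variance_le_mean_sq[of c "real m" \<beta> T W "real s"] c m \<beta> TW W(3) s
    by (simp_all add: m_def W_def T_def \<mu>_def)
  thus "2 \<le> s" by simp
  have "0 < \<mu>" using \<open>real s \<ge> 2\<close> TW m by (simp add: \<mu>_def)
  have rel: "(x + 40 * real s ^ 3 * sqrt W ^ 3 / real m ^ 3) / (\<delta> * \<mu>)\<^sup>2 \<le> 162 * \<beta> ^ 3 / (c * \<delta>\<^sup>2)"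
    if "x \<le> \<mu>" "\<delta> > 0" for x
  proof -
    have "(x + 40 * real s ^ 3 * sqrt W ^ 3 / real m ^ 3) / (\<delta> * \<mu>)\<^sup>2
          \<le> 162 * (\<beta> ^ 3 / c) * \<mu>\<^sup>2 / (\<delta> * \<mu>)\<^sup>2"
      using var that by (intro divide_right_mono) auto
    thus ?thesis using \<open>0 < \<mu>\<close> by (simp add: power_mult_distrib)
  qed
  show "measure_pmf.prob (reservoir_pmf s es m)
      {R. \<delta> * \<mu> \<le> \<bar>real (card (wedge_pairs s R)) - \<mu>\<bar>} \<le> 162 * \<beta> ^ 3 / (c * \<delta>\<^sup>2)"
    if "\<delta> > 0"
    using prob_wedge_count_deviation[OF dist edges W(2) mult_pos_pos[OF that \<open>0 < \<mu>\<close>], of s]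
      rel[of \<mu>] that
    by (simp add: m_def \<mu>_def W_def)
  have "\<nu> \<le> \<mu>" using \<open>real s \<ge> 2\<close> TW m by (simp add: \<mu>_def \<nu>_def divide_right_mono)
  thus "measure_pmf.prob (reservoir_pmf s es m)
      {R. \<delta> * \<mu> \<le> \<bar>real (card (closed_pairs s es m R)) - \<nu>\<bar>} \<le> 162 * \<beta> ^ 3 / (c * \<delta>\<^sup>2)"
    if "\<delta> > 0"
    using prob_closed_wedge_count_deviation[OF dist edges W(2) mult_pos_pos[OF that \<open>0 < \<mu>\<close>], of s]
      rel[of \<nu>] that
    by (simp add: m_def \<nu>_def W_def T_def)
qed

lemma single_bit_estimate_accurate:
  fixes es :: "edge list" and \<beta> :: real and s :: nat
  assumes dist: "distinct es" and edges: "\<forall>e\<in>set es. is_edge e"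
    and T1: "num_triangles (set es) \<ge> 1" and \<beta>: "0 < \<beta>" "\<beta> < 1"
    and s: "real s \<ge> 10^6 * real (length es) / (\<beta> ^ 3 * sqrt (real (num_triangles (set es))))"
  defines "W \<equiv> real (num_wedges (set es))"
  shows "measure_pmf.prob (sb_state s es (length es))
           {st. \<bar>W - sb_est s (length es) st\<bar> < \<beta> * W} > 1 - \<beta>"
proof -
  have "es \<noteq> []" using num_wedges_bounds(2)[OF dist edges T1] by (auto simp: num_wedges_def)
  have "(2::real) \<le> 10^6" by simp
  note concentrate =
    reservoir_counts_concentrate[OF dist edges T1 \<beta>(1) less_imp_le[OF \<beta>(2)] this s]
  have "162 * \<beta> ^ 3 / (10^6 * \<beta>\<^sup>2) < \<beta>" using \<beta> by (simp add: power2_eq_square power3_eq_cube)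
  with concentrate(2)[OF \<beta>(1)] prob_sb_est_accurate[OF dist edges \<open>es \<noteq> []\<close> concentrate(1)]
  show ?thesis by (simp add: W_def)
qed

lemma single_bit_output_bias:
  fixes es :: "edge list" and \<beta> :: real and s :: nat
  assumes dist: "distinct es" and edges: "\<forall>e\<in>set es. is_edge e"
    and T1: "num_triangles (set es) \<ge> 1" and \<beta>: "0 < \<beta>" "\<beta> < 1"
    and s: "real s \<ge> 10^6 * real (length es) / (\<beta> ^ 3 * sqrt (real (num_triangles (set es))))"
  defines "W \<equiv> real (num_wedges (set es))" and "T \<equiv> real (num_triangles (set es))"
  shows "\<bar>T / W - measure_pmf.prob (sb_final_bit s es) {True}\<bar> < \<beta>"
proof -
  define m where "m = length es"
  define Q where "Q = reservoir_pmf s es m"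
  define \<mu> where "\<mu> = real s * (real s - 1) * W / (real m)\<^sup>2"
  define \<nu> where "\<nu> = real s * (real s - 1) * T / (real m)\<^sup>2"
  have "(2::real) \<le> 10^6" by simp
  note concentrate =
    reservoir_counts_concentrate[OF dist edges T1 \<beta>(1) less_imp_le[OF \<beta>(2)] this s]
  have dev_wedges: "measure_pmf.prob Q {R. \<delta> * \<mu> \<le> \<bar>real (card (wedge_pairs s R)) - \<mu>\<bar>}
      \<le> 162 * \<beta> ^ 3 / (10^6 * \<delta>\<^sup>2)" if "\<delta> > 0" for \<delta>
    using concentrate(2)[OF that] by (simp add: Q_def m_def \<mu>_def W_def)
  have dev_closed: "measure_pmf.prob Q {R. \<delta> * \<mu> \<le> \<bar>real (card (closed_pairs s es m R)) - \<nu>\<bar>}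
      \<le> 162 * \<beta> ^ 3 / (10^6 * \<delta>\<^sup>2)" if "\<delta> > 0" for \<delta>
    using concentrate(3)[OF that] by (simp add: Q_def m_def \<mu>_def \<nu>_def W_def T_def)
  have "2 \<le> s" by (rule concentrate(1))
  note W = num_wedges_bounds[OF dist edges T1]
  have "es \<noteq> []" using W(2) by (auto simp: num_wedges_def)
  have \<mu>: "0 < \<mu>" "0 \<le> \<nu>" "\<nu> \<le> \<mu>" and "\<nu> / \<mu> = T / W"
    using \<open>2 \<le> s\<close> \<open>es \<noteq> []\<close> T1 W(1)
    by (auto simp: \<mu>_def \<nu>_def m_def W_def T_def divide_right_mono)
  have "finite (set_pmf Q)"
    unfolding Q_def m_def reservoir_pmf_length using \<open>es \<noteq> []\<close> by (intro finite_set_Pi_pmf) auto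
  moreover have "card (closed_pairs s es m R) \<le> card (wedge_pairs s R)" for R
    by (rule card_mono, rule finite_subset[of _ "{..<s} \<times> {..<s}"])
      (auto simp: wedge_pairs_def closed_pairs_def)
  ultimately have "\<bar>\<nu> / \<mu> - measure_pmf.expectation Q
        (\<lambda>R. card (closed_pairs s es m R) / card (wedge_pairs s R))\<bar>
      \<le> 8/3 * (\<beta> / 4) + 162 * \<beta> ^ 3 / (10^6 * (\<beta> / 4)\<^sup>2) + 162 * \<beta> ^ 3 / (10^6 * (\<beta> / 4)\<^sup>2)"
    using \<beta> by (intro expectation_ratio_deviation_le[OF _ _ _ \<mu>] dev_wedges dev_closed) auto
  moreover have "measure_pmf.prob (sb_final_bit s es) {True} = measure_pmf.expectation Q
      (\<lambda>R. card (closed_pairs s es m R) / card (wedge_pairs s R))"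
    using prob_sb_final_bit[OF dist edges \<open>es \<noteq> []\<close>] by (simp add: Q_def m_def)
  moreover have "8/3 * (\<beta> / 4) + 162 * \<beta> ^ 3 / (10^6 * (\<beta> / 4)\<^sup>2)
      + 162 * \<beta> ^ 3 / (10^6 * (\<beta> / 4)\<^sup>2) < \<beta>"
    using \<beta> by (simp add: power2_eq_square power3_eq_cube)
  ultimately show ?thesis using \<open>\<nu> / \<mu> = T / W\<close> by simp
qed

theorem mainTheorem1:
  "\<exists>c::real. c > 0 \<and>
    (\<forall>(es :: edge list) (\<beta> :: real) (s :: nat).
       distinct es \<longrightarrow> (\<forall>e\<in>set es. is_edge e) \<longrightarrow>
       num_triangles (set es) \<ge> 1 \<longrightarrow>
       num_wedges (set es) \<ge> length es \<longrightarrow>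
       0 < \<beta> \<longrightarrow> \<beta> < 1 \<longrightarrow>
       real s \<ge> c * real (length es) / (\<beta> ^ 3 * sqrt (real (num_triangles (set es)))) \<longrightarrow>
       (let m = length es; W = real (num_wedges (set es));
            \<kappa> = 3 * real (num_triangles (set es)) / W
        in \<bar>\<kappa> / 3 - measure_pmf.prob (sb_final_bit s es) {True}\<bar> < \<beta> \<and>
           measure_pmf.prob (sb_state s es m) {st. \<bar>W - sb_est s m st\<bar> < \<beta> * W} > 1 - \<beta>))"
proof (intro exI[of _ "10 ^ 6"] conjI allI impI)
  fix es :: "edge list" and \<beta> :: real and s :: nat
  assume "distinct es" "\<forall>e\<in>set es. is_edge e" "num_triangles (set es) \<ge> 1"
    "0 < \<beta>" "\<beta> < 1"
    "real s \<ge> 10 ^ 6 * real (length es) / (\<beta> ^ 3 * sqrt (real (num_triangles (set es))))"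
  from single_bit_output_bias[OF this] single_bit_estimate_accurate[OF this] show "let m = length es; W = real (num_wedges (set es));
            \<kappa> = 3 * real (num_triangles (set es)) / W
        in \<bar>\<kappa> / 3 - measure_pmf.prob (sb_final_bit s es) {True}\<bar> < \<beta> \<and>
           measure_pmf.prob (sb_state s es m) {st. \<bar>W - sb_est s m st\<bar> < \<beta> * W} > 1 - \<beta>"
    by (simp add: Let_def)
qed simp

end
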